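(* Consider the noisy group testing model in the context with $K>1$ and $p=\frac{1}{(1-u)K}$, and let $\Gamma=(1-q)\left(1-(1-u)p\right)^K$, $\gamma_0=\frac{u}{1-(1-u)p}$, $\psi_0'=\min\left(\frac{\gamma_0\Gamma}{1-\gamma_0\Gamma},\frac{\Gamma}{2(1-\Gamma)}\right)$, and run CoLpAl with $\psi_{lp}=\psi_0'$. Then for any constant $c_0>0$ there exist absolute constants $C_{a1},C_{a2}>0$, independent of $N$, $L$ and $K$, such that if $$M\ \ge\ (1+c_0)\,\frac{K(1-u)}{(1-q)(1-\gamma_0)^2}\left(\frac{C_{a1}\log\left[K\binom{N-K}{L-1}\right]}{(N-K)-(L-1)}+C_{a2}\log K\right),$$ then, for a given defective set $S_d$, CoLpAl outputs $L$ non-defective items with probability exceeding $1-2\exp\left(-c_0\log\left(K\binom{N-K}{L-1}\right)\right)-\exp(-c_0\log K)$.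
   Context: Group testing model: $N$ items indexed by $[N]$; a fixed defective set $S_d\subset[N]$ with $|S_d|=K$; $1\le L\le N-K$. Parameters $p\in(0,1)$, $u\in[0,1/2)$, $q\in[0,1/2)$. The test matrix $\mathbf{X}\in\{0,1\}^{M\times N}$ has i.i.d. Bernoulli($p$) entries $X_{lk}$; independently, $D_{lk}\sim\mathrm{Bernoulli}(1-u)$ i.i.d. and $W_l\sim\mathrm{Bernoulli}(q)$ i.i.d.; outcomes $Y_l=\left(\bigvee_{k\in S_d}D_{lk}X_{lk}\right)\vee W_l$ ($\vee$ = boolean OR). Logarithms are natural. Let $Y_z=\{l:Y_l=0\}$, $M_z=|Y_z|$, $Y_p=\{l:Y_l=1\}$, $M_p=|Y_p|$, and $\mathbf{X}(Y_z,:)$, $\mathbf{X}(Y_p,:)$ the row-submatrices. $\underline{1}_n,\underline{0}_n$ are all-ones/all-zeros vectors, $\preccurlyeq$ componentwise inequality. LP2 (parameter $\psi_{lp}>0$): minimize over $\underline{z}\in\mathbb{R}^N$ the objective $\underline{1}_{M_z}^T\mathbf{X}(Y_z,:)(\underline{1}_N-\underline{z})-\psi_{lp}\,\underline{1}_{M_p}^T\mathbf{X}(Y_p,:)(\underline{1}_N-\underline{z})$ subject to $\underline{0}_N\preccurlyeq\underline{z}\preccurlyeq\underline{1}_N$ and $\underline{1}_N^T\underline{z}\le L$. Algorithm CoLpAl: solve LP2 to obtain an optimal $\hat{\underline{z}}$; output a set of $L$ items indexed by the $L$ largest entries of $\hat{\underline{z}}$ (ties arbitrary). Success means the output set is disjoint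 from $S_d$. *)

theory Defs
  imports "HOL-Probability.Probability"
begin

text \<open>Items are indexed by {..<N}, tests by {..<M}.  A test matrix / dilution pattern
  is a function nat \<Rightarrow> nat \<Rightarrow> bool (row l, column k); noise is nat \<Rightarrow> bool.\<close>

definition gt_dist :: "nat \<Rightarrow> nat \<Rightarrow> real \<Rightarrow> real \<Rightarrow> real \<Rightarrow>
    ((nat \<times> nat \<Rightarrow> bool) \<times> (nat \<times> nat \<Rightarrow> bool) \<times> (nat \<Rightarrow> bool)) pmf" where
  "gt_dist M N p u q =
     pair_pmf (Pi_pmf ({..<M} \<times> {..<N}) False (\<lambda>_. bernoulli_pmf p))
      (pair_pmf (Pi_pmf ({..<M} \<times> {..<N}) False (\<lambda>_. bernoulli_pmf (1 - u)))
                (Pi_pmf {..<M} False (\<lambda>_. bernoulli_pmf q)))"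

definition gt_outcome :: "nat set \<Rightarrow> (nat \<times> nat \<Rightarrow> bool) \<Rightarrow> (nat \<times> nat \<Rightarrow> bool)
    \<Rightarrow> (nat \<Rightarrow> bool) \<Rightarrow> nat \<Rightarrow> bool" where
  "gt_outcome Sd X D W l = ((\<exists>k\<in>Sd. D (l, k) \<and> X (l, k)) \<or> W l)"

definition lp2_obj :: "nat \<Rightarrow> nat \<Rightarrow> (nat \<times> nat \<Rightarrow> bool) \<Rightarrow> (nat \<Rightarrow> bool) \<Rightarrow> real
    \<Rightarrow> (nat \<Rightarrow> real) \<Rightarrow> real" where
  "lp2_obj M N X Y psi z =
     (\<Sum>l\<in>{l. l < M \<and> \<not> Y l}. \<Sum>k<N. (if X (l, k) then 1 else 0) * (1 - z k))
     - psi * (\<Sum>l\<in>{l. l < M \<and> Y l}. \<Sum>k<N. (if X (l, k) then 1 else 0) * (1 - z k))"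

definition lp2_feasible :: "nat \<Rightarrow> nat \<Rightarrow> (nat \<Rightarrow> real) \<Rightarrow> bool" where
  "lp2_feasible N L z \<longleftrightarrow> (\<forall>k<N. 0 \<le> z k \<and> z k \<le> 1) \<and> (\<Sum>k<N. z k) \<le> real L"

definition lp2_optimal :: "nat \<Rightarrow> nat \<Rightarrow> nat \<Rightarrow> (nat \<times> nat \<Rightarrow> bool) \<Rightarrow> (nat \<Rightarrow> bool)
    \<Rightarrow> real \<Rightarrow> (nat \<Rightarrow> real) \<Rightarrow> bool" where
  "lp2_optimal M N L X Y psi zh \<longleftrightarrow> lp2_feasible N L zh \<and>
     (\<forall>z. lp2_feasible N L z \<longrightarrow> lp2_obj M N X Y psi zh \<le> lp2_obj M N X Y psi z)"

definition top_L :: "nat \<Rightarrow> nat \<Rightarrow> (nat \<Rightarrow> real) \<Rightarrow> nat set \<Rightarrow> bool" where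
  "top_L N L zh T \<longleftrightarrow> T \<subseteq> {..<N} \<and> card T = L \<and>
     (\<forall>i\<in>T. \<forall>j\<in>{..<N} - T. zh j \<le> zh i)"

text \<open>CoLpAl succeeds: whatever optimal solution of LP2 is returned and however ties
  are broken, the output set is disjoint from S_d.\<close>
definition colpal_success :: "nat \<Rightarrow> nat \<Rightarrow> nat \<Rightarrow> nat set \<Rightarrow> real \<Rightarrow>
    (nat \<times> nat \<Rightarrow> bool) \<Rightarrow> (nat \<times> nat \<Rightarrow> bool) \<Rightarrow> (nat \<Rightarrow> bool) \<Rightarrow> bool" where
  "colpal_success M N L Sd psi X D W \<longleftrightarrow>
     (\<forall>zh T. lp2_optimal M N L X (gt_outcome Sd X D W) psi zh \<longrightarrow> top_L N L zh T
        \<longrightarrow> T \<inter> Sd = {})"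

end

theory Submission
  imports Defs
begin

text \<open>
  Write the LP2 objective as \<open>\<Sum>k. (1 - z k) * w k\<close>, where the weight \<open>w k\<close> of item \<open>k\<close>
  counts the negative tests containing \<open>k\<close> minus \<open>\<psi>\<close> times the positive ones.  A perturbation
  argument on an optimal solution shows that CoLpAl succeeds whenever a threshold \<open>t0 \<ge> 0\<close>
  separates the weights: all defective weights lie below \<open>t0\<close> and at least \<open>L\<close> non-defective
  weights lie above it.  The tests are i.i.d., so failures are controlled by Chernoff bounds: a
  defective weight has mean \<open>M p \<nu>\<close>, a non-defective one at least \<open>M p (\<nu> + \<delta>)\<close>.  If fewer
  than \<open>L\<close> non-defective weights exceed \<open>t0\<close>, some \<open>m0 = (N - K) - (L - 1)\<close> non-defectives all
  stay below it.  Their weights are dependent through the outcomes, so the Chernoff bound for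
  such a set is taken jointly with the event that the total outcome value is large; it gives
  \<open>exp (- m0 E0)\<close>.  A union bound over the \<open>K\<close> defectives and the \<open>binomial (N - K) (L - 1)\<close>
  sets yields the theorem with \<open>C\<^sub>a\<^sub>1 = C\<^sub>a\<^sub>2 = 165888\<close>.
\<close>

section \<open>Product probability mass functions\<close>

lemma pmf_pair_pmf_fst_snd: "pmf (pair_pmf A B) x = pmf A (fst x) * pmf B (snd x)"
  by (cases x) (simp add: pmf_pair)

lemma Pi_pmf_zip:
  assumes "finite I"
  shows "map_pmf (\<lambda>(f, g) i. (f i, g i)) (pair_pmf (Pi_pmf I d1 P) (Pi_pmf I d2 Q)) =
         Pi_pmf I (d1, d2) (\<lambda>i. pair_pmf (P i) (Q i))"
proof (rule pmf_eqI)
  fix h :: "'a \<Rightarrow> 'b \<times> 'c"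
  let ?z = "\<lambda>(f :: 'a \<Rightarrow> 'b, g :: 'a \<Rightarrow> 'c) i. (f i, g i)"
  have inj: "inj ?z"
    by (auto simp: inj_def fun_eq_iff)
  have h: "h = ?z (fst \<circ> h, snd \<circ> h)"
    by (auto simp: fun_eq_iff)
  have "pmf (map_pmf ?z (pair_pmf (Pi_pmf I d1 P) (Pi_pmf I d2 Q))) h
      = pmf (pair_pmf (Pi_pmf I d1 P) (Pi_pmf I d2 Q)) (fst \<circ> h, snd \<circ> h)"
    by (subst h, subst pmf_map_inj'[OF inj]) simp
  also have "\<dots> = pmf (Pi_pmf I (d1, d2) (\<lambda>i. pair_pmf (P i) (Q i))) h"
    using assms by (auto simp: pmf_pair_pmf_fst_snd pmf_Pi prod.distrib prod_eq_iff)
  finally show "pmf (map_pmf ?z (pair_pmf (Pi_pmf I d1 P) (Pi_pmf I d2 Q))) h =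
      pmf (Pi_pmf I (d1, d2) (\<lambda>i. pair_pmf (P i) (Q i))) h" .
qed

lemma Pi_pmf_curry:
  assumes "finite I" "finite J"
  shows "map_pmf (\<lambda>X i j. X (i, j)) (Pi_pmf (I \<times> J) d (\<lambda>_. P)) =
         Pi_pmf I (\<lambda>_. d) (\<lambda>_. Pi_pmf J d (\<lambda>_. P))"
proof (rule pmf_eqI)
  fix h :: "'a \<Rightarrow> 'b \<Rightarrow> 'c"
  let ?c = "\<lambda>(X :: 'a \<times> 'b \<Rightarrow> 'c) i j. X (i, j)"
  have inj: "inj ?c"
    by (auto simp: inj_def fun_eq_iff)
  have h: "h = ?c (case_prod h)"
    by (auto simp: fun_eq_iff)
  have "pmf (map_pmf ?c (Pi_pmf (I \<times> J) d (\<lambda>_. P))) h = pmf (Pi_pmf (I \<times> J) d (\<lambda>_. P)) (case_prod h)"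
    by (subst h, subst pmf_map_inj'[OF inj]) simp
  also have "\<dots> = pmf (Pi_pmf I (\<lambda>_. d) (\<lambda>_. Pi_pmf J d (\<lambda>_. P))) h"
  proof (cases "\<forall>x. x \<notin> I \<times> J \<longrightarrow> case_prod h x = d")
    case True
    then show ?thesis
      using assms by (auto simp: pmf_Pi prod.cartesian_product split_def fun_eq_iff)
  next
    case outside: False
    then obtain i j where ij: "(i, j) \<notin> I \<times> J" "h i j \<noteq> d"
      by auto
    show ?thesis
    proof (cases "i \<in> I")
      case True
      with ij have "pmf (Pi_pmf J d (\<lambda>_. P)) (h i) = 0"
        using assms by (auto simp: pmf_Pi)
      then have "(\<Prod>x\<in>I. pmf (Pi_pmf J d (\<lambda>_. P)) (h x)) = 0"
        using True assms by (intro prod_zero) auto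
      moreover have "pmf (Pi_pmf (I \<times> J) d (\<lambda>_. P)) (case_prod h) = 0"
        using outside assms by (subst pmf_Pi) (auto simp del: split_paired_All)
      ultimately show ?thesis
        using assms by (subst pmf_Pi) auto
    next
      case False
      then show ?thesis
        using assms outside ij by (auto simp: pmf_Pi fun_eq_iff)
    qed
  qed
  finally show "pmf (map_pmf ?c (Pi_pmf (I \<times> J) d (\<lambda>_. P))) h =
      pmf (Pi_pmf I (\<lambda>_. d) (\<lambda>_. Pi_pmf J d (\<lambda>_. P))) h" .
qed

lemma finite_set_pmf_finite_type: "finite (set_pmf (P :: 'a :: finite pmf))"
  by (rule finite_subset[OF subset_UNIV]) simp

lemma finite_set_Pi_pmf:
  assumes "finite I" "\<And>i. i \<in> I \<Longrightarrow> finite (set_pmf (P i))"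
  shows "finite (set_pmf (Pi_pmf I d P))"
  using assms by (subst set_Pi_pmf) (auto intro!: finite_PiE_dflt)

lemma expectation_pair_pmf_mult:
  fixes f :: "'a \<Rightarrow> real" and g :: "'b \<Rightarrow> real"
  assumes A: "finite (set_pmf A)" and B: "finite (set_pmf B)"
  shows "measure_pmf.expectation (pair_pmf A B) (\<lambda>x. f (fst x) * g (snd x)) =
         measure_pmf.expectation A f * measure_pmf.expectation B g"
proof -
  have "measure_pmf.expectation (pair_pmf A B) (\<lambda>x. f (fst x) * g (snd x)) =
        (\<Sum>x\<in>set_pmf A \<times> set_pmf B. f (fst x) * g (snd x) * pmf (pair_pmf A B) x)"
    using A B by (intro integral_measure_pmf_real) auto
  also have "\<dots> = (\<Sum>a\<in>set_pmf A. \<Sum>b\<in>set_pmf B. (f a * pmf A a) * (g b * pmf B b))"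
    unfolding sum.cartesian_product by (intro sum.cong) (auto simp: pmf_pair_pmf_fst_snd mult_ac)
  also have "\<dots> = (\<Sum>a\<in>set_pmf A. f a * pmf A a) * (\<Sum>b\<in>set_pmf B. g b * pmf B b)"
    by (simp add: sum_product)
  also have "\<dots> = measure_pmf.expectation A f * measure_pmf.expectation B g"
    using A B by (simp add: integral_measure_pmf_real)
  finally show ?thesis .
qed

lemma expectation_prod_Pi_pmf_subset:
  fixes h :: "'a \<Rightarrow> 'b :: finite \<Rightarrow> real"
  assumes I: "finite I" and AI: "A \<subseteq> I" and nonneg: "\<And>k y. k \<in> A \<Longrightarrow> 0 \<le> h k y"
  shows "measure_pmf.expectation (Pi_pmf I d P) (\<lambda>y. \<Prod>k\<in>A. h k (y k)) =
         (\<Prod>k\<in>A. measure_pmf.expectation (P k) (h k))"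
proof -
  define h' where "h' k = (if k \<in> A then h k else (\<lambda>_. 1))" for k
  have extend: "(\<Prod>k\<in>A. h k (y k)) = (\<Prod>k\<in>I. h' k (y k))" for y
  proof -
    have "(\<Prod>k\<in>I. h' k (y k)) = (\<Prod>k\<in>A. h' k (y k))"
      by (rule prod.mono_neutral_right) (use AI I in \<open>auto simp: h'_def\<close>)
    then show ?thesis
      by (simp add: h'_def)
  qed
  have "measure_pmf.expectation (Pi_pmf I d P) (\<lambda>y. \<Prod>k\<in>I. h' k (y k)) =
        (\<Prod>k\<in>I. measure_pmf.expectation (P k) (h' k))"
    using I by (intro expectation_prod_Pi_pmf)
      (auto simp: h'_def nonneg integrable_measure_pmf_finite finite_set_pmf_finite_type)
  also have "\<dots> = (\<Prod>k\<in>A. measure_pmf.expectation (P k) (h' k))"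
    by (rule prod.mono_neutral_right) (use AI I in \<open>auto simp: h'_def\<close>)
  also have "\<dots> = (\<Prod>k\<in>A. measure_pmf.expectation (P k) (h k))"
    by (simp add: h'_def)
  finally show ?thesis
    unfolding extend .
qed

lemma prob_Pi_pmf_sum_ge:
  fixes g :: "'a \<Rightarrow> real"
  assumes I: "finite I" and P: "finite (set_pmf P)"
    and mgf: "measure_pmf.expectation P (\<lambda>x. exp (g x)) \<le> exp b"
  shows "measure_pmf.prob (Pi_pmf I d (\<lambda>_. P)) {r. a \<le> (\<Sum>i\<in>I. g (r i))}
           \<le> exp (real (card I) * b - a)"
proof -
  let ?Q = "Pi_pmf I d (\<lambda>_. P)"
  have fin: "finite (set_pmf ?Q)"
    using I P by (rule finite_set_Pi_pmf)
  have "measure_pmf.prob ?Q {r. a \<le> (\<Sum>i\<in>I. g (r i))}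
      = measure_pmf.expectation ?Q (indicator {r. a \<le> (\<Sum>i\<in>I. g (r i))})"
    by simp
  also have "\<dots> \<le> measure_pmf.expectation ?Q (\<lambda>r. exp (- a) * (\<Prod>i\<in>I. exp (g (r i))))"
  proof (intro integral_mono_AE AE_pmfI)
    fix r
    have "indicator {r. a \<le> (\<Sum>i\<in>I. g (r i))} r \<le> exp ((\<Sum>i\<in>I. g (r i)) - a)"
      by (auto simp: indicator_def)
    also have "\<dots> = exp (- a) * (\<Prod>i\<in>I. exp (g (r i)))"
      using I by (simp add: exp_sum exp_diff exp_minus field_simps)
    finally show "indicator {r. a \<le> (\<Sum>i\<in>I. g (r i))} r \<le> exp (- a) * (\<Prod>i\<in>I. exp (g (r i)))" .
  qed (use fin in \<open>auto intro: integrable_measure_pmf_finite\<close>)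
  also have "\<dots> = exp (- a) * measure_pmf.expectation P (\<lambda>x. exp (g x)) ^ card I"
    using I P by (subst integral_mult_right_zero, subst expectation_prod_Pi_pmf)
      (auto simp: integrable_measure_pmf_finite)
  also have "\<dots> \<le> exp (- a) * exp b ^ card I"
    using mgf by (intro mult_left_mono power_mono) auto
  also have "\<dots> = exp (real (card I) * b - a)"
    by (simp add: exp_diff exp_minus exp_of_nat_mult[symmetric] field_simps)
  finally show ?thesis .
qed

section \<open>Test rows\<close>

text \<open>
  A row records, for each item, its entries of \<open>X\<close> and \<open>D\<close> (tested, undiluted), together with
  the noise bit of \<open>W\<close>.
\<close>

definition entry_pmf :: "real \<Rightarrow> real \<Rightarrow> (bool \<times> bool) pmf" where
  "entry_pmf p u = pair_pmf (bernoulli_pmf p) (bernoulli_pmf (1 - u))"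

definition row_pmf :: "nat \<Rightarrow> real \<Rightarrow> real \<Rightarrow> real \<Rightarrow> ((nat \<Rightarrow> bool \<times> bool) \<times> bool) pmf" where
  "row_pmf N p u q = pair_pmf (Pi_pmf {..<N} (False, False) (\<lambda>_. entry_pmf p u)) (bernoulli_pmf q)"

definition rows_of :: "(nat \<times> nat \<Rightarrow> bool) \<times> (nat \<times> nat \<Rightarrow> bool) \<times> (nat \<Rightarrow> bool)
    \<Rightarrow> nat \<Rightarrow> (nat \<Rightarrow> bool \<times> bool) \<times> bool" where
  "rows_of = (\<lambda>(X, D, W) l. (\<lambda>k. (X (l, k), D (l, k)), W l))"

lemma pair_pmf_assoc:
  "pair_pmf A (pair_pmf B C) = map_pmf (\<lambda>((x, y), z). (x, (y, z))) (pair_pmf (pair_pmf A B) C)"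
  by (simp add: pair_pair_pmf map_pmf_comp case_prod_unfold)

lemma map_rows_of_gt_dist:
  "map_pmf rows_of (gt_dist M N p u q) = Pi_pmf {..<M} (\<lambda>_. (False, False), False) (\<lambda>_. row_pmf N p u q)"
proof -
  let ?zip = "\<lambda>(f :: nat \<times> nat \<Rightarrow> bool, g :: nat \<times> nat \<Rightarrow> bool) i. (f i, g i)"
  let ?curry = "\<lambda>(X :: nat \<times> nat \<Rightarrow> bool \<times> bool) i j. X (i, j)"
  let ?zip_rows = "\<lambda>(f :: nat \<Rightarrow> nat \<Rightarrow> bool \<times> bool, g :: nat \<Rightarrow> bool) i. (f i, g i)"
  let ?PX = "Pi_pmf ({..<M} \<times> {..<N}) False (\<lambda>_. bernoulli_pmf p)"
  let ?PD = "Pi_pmf ({..<M} \<times> {..<N}) False (\<lambda>_. bernoulli_pmf (1 - u))"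
  let ?PW = "Pi_pmf {..<M} False (\<lambda>_. bernoulli_pmf q)"
  have "map_pmf rows_of (gt_dist M N p u q) =
      map_pmf ?zip_rows (map_pmf (\<lambda>(a, b). ((?curry \<circ> ?zip) a, b)) (pair_pmf (pair_pmf ?PX ?PD) ?PW))"
    unfolding gt_dist_def pair_pmf_assoc map_pmf_comp
    by (intro map_pmf_cong refl) (auto simp: rows_of_def fun_eq_iff)
  also have "\<dots> = map_pmf ?zip_rows (pair_pmf (map_pmf ?curry (map_pmf ?zip (pair_pmf ?PX ?PD))) ?PW)"
    by (subst map_pair) (simp add: map_pmf_comp o_def)
  also have "map_pmf ?zip (pair_pmf ?PX ?PD) = Pi_pmf ({..<M} \<times> {..<N}) (False, False) (\<lambda>_. entry_pmf p u)"
    unfolding entry_pmf_def by (rule Pi_pmf_zip) simp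
  also have "map_pmf ?curry \<dots> =
      Pi_pmf {..<M} (\<lambda>_. (False, False)) (\<lambda>_. Pi_pmf {..<N} (False, False) (\<lambda>_. entry_pmf p u))"
    by (rule Pi_pmf_curry) simp_all
  also have "map_pmf ?zip_rows (pair_pmf \<dots> ?PW) =
      Pi_pmf {..<M} (\<lambda>_. (False, False), False) (\<lambda>_. row_pmf N p u q)"
    unfolding row_pmf_def by (rule Pi_pmf_zip) simp
  finally show ?thesis .
qed

lemma finite_set_row_pmf: "finite (set_pmf (row_pmf N p u q))"
  unfolding row_pmf_def
  by (simp add: finite_set_Pi_pmf finite_set_pmf_finite_type)

lemma expectation_entry_pmf:
  assumes "0 \<le> p" "p \<le> 1" "0 \<le> u" "u \<le> 1"
  shows "measure_pmf.expectation (entry_pmf p u) f =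
     f (True, True) * (p * (1 - u)) + f (True, False) * (p * u)
     + f (False, True) * ((1 - p) * (1 - u)) + f (False, False) * ((1 - p) * u)"
proof -
  have "measure_pmf.expectation (entry_pmf p u) f = (\<Sum>x\<in>UNIV. f x * pmf (entry_pmf p u) x)"
    by (rule integral_measure_pmf_real) auto
  also have "(UNIV :: (bool \<times> bool) set) = {(True, True), (True, False), (False, True), (False, False)}"
    by auto
  finally show ?thesis
    using assms by (simp add: entry_pmf_def pmf_pair)
qed

lemma expectation_row_pmf_prod:
  fixes \<phi> :: "bool \<Rightarrow> real" and h :: "nat \<Rightarrow> bool \<times> bool \<Rightarrow> real"
  assumes "A \<subseteq> {..<N}" and "\<And>k y. k \<in> A \<Longrightarrow> 0 \<le> h k y"
  shows "measure_pmf.expectation (row_pmf N p u q) (\<lambda>\<rho>. \<phi> (snd \<rho>) * (\<Prod>k\<in>A. h k (fst \<rho> k))) =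
         measure_pmf.expectation (bernoulli_pmf q) \<phi> * (\<Prod>k\<in>A. measure_pmf.expectation (entry_pmf p u) (h k))"
proof -
  have "measure_pmf.expectation (row_pmf N p u q) (\<lambda>\<rho>. \<phi> (snd \<rho>) * (\<Prod>k\<in>A. h k (fst \<rho> k))) =
        measure_pmf.expectation (row_pmf N p u q) (\<lambda>\<rho>. (\<Prod>k\<in>A. h k (fst \<rho> k)) * \<phi> (snd \<rho>))"
    by (simp add: mult.commute)
  also have "\<dots> = measure_pmf.expectation (Pi_pmf {..<N} (False, False) (\<lambda>_. entry_pmf p u))
        (\<lambda>y. \<Prod>k\<in>A. h k (y k)) * measure_pmf.expectation (bernoulli_pmf q) \<phi>"
    unfolding row_pmf_def
    by (rule expectation_pair_pmf_mult[where f = "\<lambda>y. \<Prod>k\<in>A. h k (y k)"])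
      (simp_all add: finite_set_Pi_pmf finite_set_pmf_finite_type)
  also have "measure_pmf.expectation (Pi_pmf {..<N} (False, False) (\<lambda>_. entry_pmf p u))
        (\<lambda>y. \<Prod>k\<in>A. h k (y k)) = (\<Prod>k\<in>A. measure_pmf.expectation (entry_pmf p u) (h k))"
    by (rule expectation_prod_Pi_pmf_subset) (use assms in auto)
  finally show ?thesis
    by simp
qed

section \<open>LP2 in terms of item weights\<close>

definition lp2_weight :: "nat \<Rightarrow> (nat \<times> nat \<Rightarrow> bool) \<Rightarrow> (nat \<Rightarrow> bool) \<Rightarrow> real \<Rightarrow> nat \<Rightarrow> real" where
  "lp2_weight M X Y \<psi> k = (\<Sum>l<M. if X (l, k) then (if Y l then - \<psi> else 1) else 0)"

lemma lp2_obj_eq_weighted_sum: "lp2_obj M N X Y \<psi> z = (\<Sum>k<N. (1 - z k) * lp2_weight M X Y \<psi> k)"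
proof -
  have split: "{l. l < M \<and> \<not> Y l} = {l\<in>{..<M}. \<not> Y l}" "{l. l < M \<and> Y l} = {l\<in>{..<M}. Y l}"
    by auto
  have "lp2_obj M N X Y \<psi> z =
      (\<Sum>l<M. \<Sum>k<N. (if X (l, k) then 1 else 0) * (1 - z k) * (if Y l then - \<psi> else 1))"
    unfolding lp2_obj_def split sum.inter_filter[OF finite_lessThan] sum_distrib_left
      sum_subtractf[symmetric]
    by (intro sum.cong refl) (auto simp: sum_distrib_left sum_negf[symmetric] mult_ac)
  also have "\<dots> = (\<Sum>k<N. (1 - z k) * lp2_weight M X Y \<psi> k)"
    unfolding lp2_weight_def by (subst sum.swap) (auto simp: sum_distrib_left intro!: sum.cong)
  finally show ?thesis .
qed

lemma sum_fun_upd: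
  fixes g :: "real \<Rightarrow> nat \<Rightarrow> real"
  assumes "finite A" "a \<in> A"
  shows "(\<Sum>k\<in>A. g ((z(a := x)) k) k) = (\<Sum>k\<in>A. g (z k) k) - g (z a) a + g x a"
  using assms by (simp add: sum.remove[of A a] sum.cong[of "A - {a}" "A - {a}"
      "\<lambda>k. g ((z(a := x)) k) k" "\<lambda>k. g (z k) k"])

lemma lp2_obj_fun_upd:
  assumes "a < N"
  shows "lp2_obj M N X Y \<psi> (z(a := x)) = lp2_obj M N X Y \<psi> z - (x - z a) * lp2_weight M X Y \<psi> a"
  using assms sum_fun_upd[of "{..<N}" a "\<lambda>x k. (1 - x) * lp2_weight M X Y \<psi> k" z x]
  by (simp add: lp2_obj_eq_weighted_sum algebra_simps)

lemma sum_lessThan_fun_upd: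
  fixes z :: "nat \<Rightarrow> real"
  shows "a < N \<Longrightarrow> (\<Sum>k<N. (z(a := x)) k) = (\<Sum>k<N. z k) - z a + x"
  using sum_fun_upd[of "{..<N}" a "\<lambda>x k. x" z x] by simp

context
  fixes M N L :: nat and X :: "nat \<times> nat \<Rightarrow> bool" and Y :: "nat \<Rightarrow> bool" and \<psi> :: real
    and zh :: "nat \<Rightarrow> real"
  assumes optimal: "lp2_optimal M N L X Y \<psi> zh"
begin

lemma lp2_optimal_bounds: "\<And>k. k < N \<Longrightarrow> 0 \<le> zh k" "\<And>k. k < N \<Longrightarrow> zh k \<le> 1"
    "(\<Sum>k<N. zh k) \<le> real L"
  using optimal by (auto simp: lp2_optimal_def lp2_feasible_def)

lemma lp2_optimal_le: "lp2_feasible N L z \<Longrightarrow> lp2_obj M N X Y \<psi> zh \<le> lp2_obj M N X Y \<psi> z"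
  using optimal by (auto simp: lp2_optimal_def)

lemma lp2_optimal_saturated:
  assumes a: "a < N" and pos: "0 < lp2_weight M X Y \<psi> a"
  shows "zh a = 1 \<or> (\<Sum>k<N. zh k) = real L"
proof (rule ccontr)
  assume "\<not> ?thesis"
  then have room: "zh a < 1" "(\<Sum>k<N. zh k) < real L"
    using a lp2_optimal_bounds by force+
  define e where "e = min (1 - zh a) (real L - (\<Sum>k<N. zh k))"
  have e: "0 < e" "e \<le> 1 - zh a" "e \<le> real L - (\<Sum>k<N. zh k)"
    using room by (auto simp: e_def)
  have "(\<Sum>k<N. (zh(a := zh a + e)) k) = (\<Sum>k<N. zh k) + e"
    using a by (simp only: sum_lessThan_fun_upd)
  then have "lp2_feasible N L (zh(a := zh a + e))"
    unfolding lp2_feasible_def using a e lp2_optimal_bounds by auto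
  then have "lp2_obj M N X Y \<psi> zh \<le> lp2_obj M N X Y \<psi> (zh(a := zh a + e))"
    by (rule lp2_optimal_le)
  also have "\<dots> = lp2_obj M N X Y \<psi> zh - e * lp2_weight M X Y \<psi> a"
    using a by (simp add: lp2_obj_fun_upd)
  finally show False
    using mult_pos_pos[OF e(1) pos] by linarith
qed

lemma lp2_optimal_exchange:
  assumes a: "a < N" and d: "d < N" and less: "lp2_weight M X Y \<psi> d < lp2_weight M X Y \<psi> a"
  shows "zh a = 1 \<or> zh d = 0"
proof (rule ccontr)
  assume "\<not> ?thesis"
  then have room: "zh a < 1" "0 < zh d"
    using a d lp2_optimal_bounds by force+
  have "a \<noteq> d"
    using less by auto
  define e where "e = min (zh d) (1 - zh a)"
  have e: "0 < e" "e \<le> zh d" "e \<le> 1 - zh a"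
    using room by (auto simp: e_def)
  define z where "z = (zh(a := zh a + e))(d := zh d - e)"
  have "(\<Sum>k<N. z k) = (\<Sum>k<N. zh k)"
    unfolding z_def using a d \<open>a \<noteq> d\<close> by (simp only: sum_lessThan_fun_upd) simp
  moreover have "zh d - e \<le> 1" "0 \<le> zh a + e"
    using e lp2_optimal_bounds a d by force+
  ultimately have "lp2_feasible N L z"
    unfolding lp2_feasible_def using a d e lp2_optimal_bounds by (auto simp: z_def)
  then have "lp2_obj M N X Y \<psi> zh \<le> lp2_obj M N X Y \<psi> z"
    by (rule lp2_optimal_le)
  also have "\<dots> = lp2_obj M N X Y \<psi> zh - e * (lp2_weight M X Y \<psi> a - lp2_weight M X Y \<psi> d)"
    unfolding z_def using a d \<open>a \<noteq> d\<close> by (simp add: lp2_obj_fun_upd algebra_simps)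
  finally show False
    using mult_pos_pos[of e "lp2_weight M X Y \<psi> a - lp2_weight M X Y \<psi> d"] e less by linarith
qed


lemma top_L_heavier_mem:
  assumes top: "top_L N L zh T" and dT: "d \<in> T" and a: "a < N"
    and less: "lp2_weight M X Y \<psi> d < lp2_weight M X Y \<psi> a" and pos: "0 < lp2_weight M X Y \<psi> a"
  shows "a \<in> T"
proof (rule ccontr)
  assume aT: "a \<notin> T"
  have TN: "T \<subseteq> {..<N}" and card_T: "card T = L"
    and above: "\<And>i j. i \<in> T \<Longrightarrow> j < N \<Longrightarrow> j \<notin> T \<Longrightarrow> zh j \<le> zh i"
    using top unfolding top_L_def by auto
  have fin_T: "finite T"
    using TN finite_subset by blast
  have "d < N"
    using dT TN by auto
  have sum_T: "(\<Sum>k\<in>insert a T. zh k) \<le> (\<Sum>k<N. zh k)"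
    by (rule sum_mono2) (use TN a lp2_optimal_bounds in auto)
  consider "zh a = 1" | "zh d = 0"
    using lp2_optimal_exchange[OF a \<open>d < N\<close> less] by blast
  then show False
  proof cases
    case 1
    then have "\<forall>i\<in>T. 1 \<le> zh i"
      using above a aT by fastforce
    then have "real L \<le> (\<Sum>k\<in>T. zh k)"
      using sum_mono[of T "\<lambda>_. 1" zh] card_T by simp
    then show False
      using sum_T lp2_optimal_bounds(3) 1 aT fin_T by simp
  next
    case 2
    have outside: "zh j = 0" if "j < N" "j \<notin> T" for j
      using above[OF dT that] 2 lp2_optimal_bounds(1)[OF that(1)] by simp
    have "(\<Sum>k<N. zh k) = (\<Sum>k\<in>T - {d}. zh k)"
      using TN outside 2 dT by (intro sum.mono_neutral_right) auto
    also have "\<dots> \<le> (\<Sum>k\<in>T - {d}. 1)"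
      by (rule sum_mono) (use TN lp2_optimal_bounds in auto)
    also have "\<dots> < real L"
    proof -
      have "0 < L"
        using card_T dT fin_T card_gt_0_iff by blast
      then show ?thesis
        using card_T dT fin_T by simp
    qed
    finally show False
      using lp2_optimal_saturated[OF a pos] outside[OF a aT] by linarith
  qed
qed

end

lemma exists_not_in_if_card_le:
  assumes "finite T" "card T \<le> card A" "d \<in> T" "d \<notin> A"
  shows "\<exists>a\<in>A. a \<notin> T"
proof (rule ccontr)
  assume "\<not> ?thesis"
  then have "A \<subseteq> T - {d}"
    using assms(4) by auto
  then have "card A \<le> card (T - {d})"
    using assms(1) by (intro card_mono) auto
  also have "\<dots> < card T"
    using assms(1,3) by (rule card_Diff1_less)
  finally show False
    using assms(2) by simp
qed

lemma colpal_success_if_weights_separated: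
  fixes M N L :: nat and Sd :: "nat set" and X D :: "nat \<times> nat \<Rightarrow> bool" and W :: "nat \<Rightarrow> bool"
    and \<psi> t :: real
  defines "w \<equiv> lp2_weight M X (gt_outcome Sd X D W) \<psi>"
  assumes Sd: "Sd \<subseteq> {..<N}" and t: "0 \<le> t"
    and defective: "\<forall>d\<in>Sd. w d < t"
    and nondefective: "L \<le> card {k\<in>{..<N} - Sd. t < w k}"
  shows "colpal_success M N L Sd \<psi> X D W"
  unfolding colpal_success_def
proof (intro allI impI)
  fix zh T
  assume opt: "lp2_optimal M N L X (gt_outcome Sd X D W) \<psi> zh" and top: "top_L N L zh T"
  show "T \<inter> Sd = {}"
  proof (rule ccontr)
    assume "T \<inter> Sd \<noteq> {}"
    then obtain d where dT: "d \<in> T" and dS: "d \<in> Sd"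
      by auto
    have "T \<subseteq> {..<N}" "card T = L"
      using top unfolding top_L_def by auto
    then have "finite T" "card T = L"
      using finite_subset by auto
    then obtain a where "a \<in> {k\<in>{..<N} - Sd. t < w k}" "a \<notin> T"
      using exists_not_in_if_card_le[of T "{k\<in>{..<N} - Sd. t < w k}" d] nondefective dT dS by auto
    moreover have "a \<in> T" if "a < N" "t < w a"
      using top_L_heavier_mem[OF opt top dT] that t defective dS unfolding w_def by force
    ultimately show False
      by auto
  qed
qed

section \<open>Moment generating functions of a row\<close>

definition row_positive :: "nat set \<Rightarrow> (nat \<Rightarrow> bool \<times> bool) \<times> bool \<Rightarrow> bool" where
  "row_positive Sd \<rho> \<longleftrightarrow> (\<exists>k\<in>Sd. snd (fst \<rho> k) \<and> fst (fst \<rho> k)) \<or> snd \<rho>"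

definition outcome_value :: "real \<Rightarrow> nat set \<Rightarrow> (nat \<Rightarrow> bool \<times> bool) \<times> bool \<Rightarrow> real" where
  "outcome_value \<psi> Sd \<rho> = (if row_positive Sd \<rho> then - \<psi> else 1)"

definition item_score :: "real \<Rightarrow> nat set \<Rightarrow> nat \<Rightarrow> (nat \<Rightarrow> bool \<times> bool) \<times> bool \<Rightarrow> real" where
  "item_score \<psi> Sd k \<rho> = (if fst (fst \<rho> k) then outcome_value \<psi> Sd \<rho> else 0)"

lemma row_positive_rows_of: "row_positive Sd (rows_of (X, D, W) l) = gt_outcome Sd X D W l"
  by (simp add: row_positive_def rows_of_def gt_outcome_def)

lemma tested_rows_of: "fst (fst (rows_of (X, D, W) l) k) = X (l, k)"
  by (simp add: rows_of_def)

lemma lp2_weight_eq_sum_item_score: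
  "lp2_weight M X (gt_outcome Sd X D W) \<psi> k = (\<Sum>l<M. item_score \<psi> Sd k (rows_of (X, D, W) l))"
  unfolding lp2_weight_def item_score_def outcome_value_def row_positive_rows_of tested_rows_of ..

lemma prod_indicator_eq:
  "finite A \<Longrightarrow> (\<Prod>k\<in>A. (if P k then 0 else 1 :: real)) = (if \<exists>k\<in>A. P k then 0 else 1)"
  by (induct rule: finite_induct) auto

lemma row_negative_as_prod:
  "finite Sd \<Longrightarrow> (if row_positive Sd \<rho> then 0 else 1 :: real) =
     (if snd \<rho> then 0 else 1) * (\<Prod>k\<in>Sd. (\<lambda>(x, d). if d \<and> x then 0 else 1) (fst \<rho> k))"
  by (simp add: row_positive_def case_prod_unfold prod_indicator_eq)

lemma integrable_row_pmf [simp]: "integrable (row_pmf N p u q) (f :: _ \<Rightarrow> real)"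
  by (rule integrable_measure_pmf_finite[OF finite_set_row_pmf])

context
  fixes N :: nat and p u q :: real and Sd :: "nat set"
  assumes p: "0 \<le> p" "p \<le> 1" and u: "0 \<le> u" "u \<le> 1" and q: "0 \<le> q" "q \<le> 1"
    and Sd: "Sd \<subseteq> {..<N}"
begin

lemma expectation_entry_not_detected:
  "measure_pmf.expectation (entry_pmf p u) (\<lambda>(x, d). if d \<and> x then 0 else 1 :: real) = 1 - p * (1 - u)"
  using p u by (simp add: expectation_entry_pmf algebra_simps)

lemma expectation_row_negative:
  "measure_pmf.expectation (row_pmf N p u q) (\<lambda>\<rho>. if row_positive Sd \<rho> then 0 else 1 :: real)
     = (1 - q) * (1 - p * (1 - u)) ^ card Sd"
proof -
  have "measure_pmf.expectation (row_pmf N p u q) (\<lambda>\<rho>. if row_positive Sd \<rho> then 0 else 1 :: real) =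
    measure_pmf.expectation (row_pmf N p u q) (\<lambda>\<rho>. (\<lambda>w. if w then 0 else 1 :: real) (snd \<rho>) *
       (\<Prod>k\<in>Sd. (\<lambda>(x, d). if d \<and> x then 0 else 1) (fst \<rho> k)))"
    using finite_subset[OF Sd finite_lessThan] by (simp add: row_negative_as_prod)
  also have "\<dots> = (1 - q) * (1 - p * (1 - u)) ^ card Sd"
    by (subst expectation_row_pmf_prod) (use Sd q in \<open>auto simp: expectation_entry_not_detected\<close>)
  finally show ?thesis .
qed

lemma expectation_item_tested:
  assumes "k < N"
  shows "measure_pmf.expectation (row_pmf N p u q) (\<lambda>\<rho>. if fst (fst \<rho> k) then 1 else 0 :: real) = p"
proof -
  have "measure_pmf.expectation (row_pmf N p u q) (\<lambda>\<rho>. if fst (fst \<rho> k) then 1 else 0 :: real) =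
    measure_pmf.expectation (row_pmf N p u q) (\<lambda>\<rho>. (\<lambda>w. 1 :: real) (snd \<rho>) *
       (\<Prod>k\<in>{k}. (\<lambda>(x, d). if x then 1 else 0) (fst \<rho> k)))"
    by (simp add: case_prod_unfold)
  also have "\<dots> = p"
    by (subst expectation_row_pmf_prod) (use assms q p u in \<open>auto simp: expectation_entry_pmf algebra_simps\<close>)
  finally show ?thesis .
qed

lemma expectation_defective_tested_negative:
  assumes d: "d \<in> Sd"
  shows "measure_pmf.expectation (row_pmf N p u q)
      (\<lambda>\<rho>. if fst (fst \<rho> d) \<and> \<not> row_positive Sd \<rho> then 1 else 0 :: real)
     = (1 - q) * (p * u) * (1 - p * (1 - u)) ^ (card Sd - 1)"
proof -
  define h where "h k = (if k = d then (\<lambda>(x, dd). if x \<and> \<not> dd then 1 else 0)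
                         else (\<lambda>(x, dd). if dd \<and> x then 0 else 1 :: real))" for k
  have split: "(if fst (fst \<rho> d) \<and> \<not> row_positive Sd \<rho> then 1 else 0 :: real) =
     (\<lambda>w. if w then 0 else 1 :: real) (snd \<rho>) * (\<Prod>k\<in>Sd. h k (fst \<rho> k))" for \<rho>
  proof -
    have "(\<Prod>k\<in>Sd. h k (fst \<rho> k)) = h d (fst \<rho> d) * (\<Prod>k\<in>Sd - {d}. h k (fst \<rho> k))"
      using finite_subset[OF Sd finite_lessThan] d by (simp add: prod.remove)
    also have "(\<Prod>k\<in>Sd - {d}. h k (fst \<rho> k)) =
        (\<Prod>k\<in>Sd - {d}. (if snd (fst \<rho> k) \<and> fst (fst \<rho> k) then 0 else 1))"
      by (intro prod.cong) (auto simp: h_def case_prod_unfold)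
    also have "\<dots> = (if \<exists>k\<in>Sd - {d}. snd (fst \<rho> k) \<and> fst (fst \<rho> k) then 0 else 1)"
      using finite_subset[OF Sd finite_lessThan] by (simp add: prod_indicator_eq)
    finally show ?thesis
      using d by (auto simp: h_def case_prod_unfold row_positive_def)
  qed
  have "measure_pmf.expectation (row_pmf N p u q)
      (\<lambda>\<rho>. if fst (fst \<rho> d) \<and> \<not> row_positive Sd \<rho> then 1 else 0 :: real) =
     (1 - q) * (\<Prod>k\<in>Sd. measure_pmf.expectation (entry_pmf p u) (h k))"
    unfolding split by (subst expectation_row_pmf_prod) (use Sd q in \<open>auto simp: h_def\<close>)
  also have "(\<Prod>k\<in>Sd. measure_pmf.expectation (entry_pmf p u) (h k)) =
      measure_pmf.expectation (entry_pmf p u) (h d) *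
      (\<Prod>k\<in>Sd - {d}. measure_pmf.expectation (entry_pmf p u) (h k))"
    using finite_subset[OF Sd finite_lessThan] d by (simp add: prod.remove)
  also have "(\<Prod>k\<in>Sd - {d}. measure_pmf.expectation (entry_pmf p u) (h k)) =
      (1 - p * (1 - u)) ^ (card Sd - 1)"
    using finite_subset[OF Sd finite_lessThan] d by (simp add: h_def expectation_entry_not_detected)
  also have "measure_pmf.expectation (entry_pmf p u) (h d) = p * u"
    using p u by (simp add: h_def expectation_entry_pmf)
  finally show ?thesis
    by simp
qed

lemma expectation_prod_tested:
  assumes S: "S \<subseteq> {..<N}" and c: "0 \<le> c"
  shows "measure_pmf.expectation (row_pmf N p u q) (\<lambda>\<rho>. \<Prod>k\<in>S. if fst (fst \<rho> k) then c else 1)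
     = (1 - p + p * c) ^ card S"
proof -
  have "measure_pmf.expectation (row_pmf N p u q) (\<lambda>\<rho>. \<Prod>k\<in>S. if fst (fst \<rho> k) then c else 1) =
    measure_pmf.expectation (row_pmf N p u q) (\<lambda>\<rho>. (\<lambda>w. 1 :: real) (snd \<rho>) *
       (\<Prod>k\<in>S. (\<lambda>(x, d). if x then c else 1) (fst \<rho> k)))"
    by (simp add: case_prod_unfold)
  also have "\<dots> = (1 - p + p * c) ^ card S"
    by (subst expectation_row_pmf_prod) (use S q p u c in \<open>auto simp: expectation_entry_pmf algebra_simps\<close>)
  finally show ?thesis .
qed

lemma expectation_negative_prod_tested:
  assumes S: "S \<subseteq> {..<N}" "S \<inter> Sd = {}" and c: "0 \<le> c"
  shows "measure_pmf.expectation (row_pmf N p u q)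
      (\<lambda>\<rho>. (if row_positive Sd \<rho> then 0 else 1) * (\<Prod>k\<in>S. if fst (fst \<rho> k) then c else 1))
     = (1 - q) * (1 - p * (1 - u)) ^ card Sd * (1 - p + p * c) ^ card S"
proof -
  define h where "h k = (if k \<in> Sd then (\<lambda>(x, d). if d \<and> x then 0 else 1)
                         else (\<lambda>(x, d). if x then c else 1 :: real))" for k
  have fin_S: "finite S"
    using S finite_subset by blast
  have split: "(if row_positive Sd \<rho> then 0 else 1) * (\<Prod>k\<in>S. if fst (fst \<rho> k) then c else 1) =
     (\<lambda>w. if w then 0 else 1 :: real) (snd \<rho>) * (\<Prod>k\<in>Sd \<union> S. h k (fst \<rho> k))" for \<rho>
  proof -
    have "(\<Prod>k\<in>Sd \<union> S. h k (fst \<rho> k)) = (\<Prod>k\<in>Sd. h k (fst \<rho> k)) * (\<Prod>k\<in>S. h k (fst \<rho> k))"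
      by (rule prod.union_disjoint) (use finite_subset[OF Sd finite_lessThan] fin_S S in auto)
    also have "(\<Prod>k\<in>Sd. h k (fst \<rho> k)) = (\<Prod>k\<in>Sd. (\<lambda>(x, d). if d \<and> x then 0 else 1) (fst \<rho> k))"
      by (intro prod.cong) (auto simp: h_def)
    also have "(\<Prod>k\<in>S. h k (fst \<rho> k)) = (\<Prod>k\<in>S. if fst (fst \<rho> k) then c else 1)"
      using S by (intro prod.cong) (auto simp: h_def case_prod_unfold)
    finally show ?thesis
      using finite_subset[OF Sd finite_lessThan] by (simp add: row_negative_as_prod)
  qed
  have "measure_pmf.expectation (row_pmf N p u q)
      (\<lambda>\<rho>. (if row_positive Sd \<rho> then 0 else 1) * (\<Prod>k\<in>S. if fst (fst \<rho> k) then c else 1)) =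
     (1 - q) * (\<Prod>k\<in>Sd \<union> S. measure_pmf.expectation (entry_pmf p u) (h k))"
    unfolding split by (subst expectation_row_pmf_prod) (use Sd S q c in \<open>auto simp: h_def\<close>)
  also have "(\<Prod>k\<in>Sd \<union> S. measure_pmf.expectation (entry_pmf p u) (h k)) =
     (\<Prod>k\<in>Sd. measure_pmf.expectation (entry_pmf p u) (h k)) *
     (\<Prod>k\<in>S. measure_pmf.expectation (entry_pmf p u) (h k))"
    by (rule prod.union_disjoint) (use finite_subset[OF Sd finite_lessThan] fin_S S in auto)
  also have "(\<Prod>k\<in>Sd. measure_pmf.expectation (entry_pmf p u) (h k)) = (1 - p * (1 - u)) ^ card Sd"
    by (simp add: h_def expectation_entry_not_detected)
  also have "(\<Prod>k\<in>S. measure_pmf.expectation (entry_pmf p u) (h k)) = (1 - p + p * c) ^ card S"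
    using S p u by (simp add: h_def expectation_entry_pmf algebra_simps disjoint_iff)
  finally show ?thesis
    by simp
qed

lemma mgf_outcome_value:
  "measure_pmf.expectation (row_pmf N p u q) (\<lambda>\<rho>. exp (- \<theta> * outcome_value \<psi> Sd \<rho>))
     = exp (\<theta> * \<psi>) + (exp (- \<theta>) - exp (\<theta> * \<psi>)) * ((1 - q) * (1 - p * (1 - u)) ^ card Sd)"
proof -
  have "(\<lambda>\<rho>. exp (- \<theta> * outcome_value \<psi> Sd \<rho>)) =
      (\<lambda>\<rho>. exp (\<theta> * \<psi>) + (exp (- \<theta>) - exp (\<theta> * \<psi>)) * (if row_positive Sd \<rho> then 0 else 1))"
    by (auto simp: fun_eq_iff outcome_value_def)
  then show ?thesis
    by (simp add: expectation_row_negative)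
qed

lemma mgf_defective_score:
  assumes d: "d \<in> Sd"
  shows "measure_pmf.expectation (row_pmf N p u q) (\<lambda>\<rho>. exp (\<theta> * item_score \<psi> Sd d \<rho>))
     = 1 + (exp (- \<theta> * \<psi>) - 1) * p
       + (exp \<theta> - exp (- \<theta> * \<psi>)) * ((1 - q) * (p * u) * (1 - p * (1 - u)) ^ (card Sd - 1))"
proof -
  have "d < N"
    using d Sd by auto
  have "(\<lambda>\<rho>. exp (\<theta> * item_score \<psi> Sd d \<rho>)) =
      (\<lambda>\<rho>. 1 + (exp (- \<theta> * \<psi>) - 1) * (if fst (fst \<rho> d) then 1 else 0)
       + (exp \<theta> - exp (- \<theta> * \<psi>)) * (if fst (fst \<rho> d) \<and> \<not> row_positive Sd \<rho> then 1 else 0))"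
    by (auto simp: fun_eq_iff outcome_value_def item_score_def)
  then show ?thesis
    by (simp add: expectation_item_tested[OF \<open>d < N\<close>] expectation_defective_tested_negative[OF d])
qed

lemma mgf_outcome_minus_scores:
  assumes S: "S \<subseteq> {..<N}" "S \<inter> Sd = {}" and \<theta>: "0 \<le> \<theta>"
  shows "measure_pmf.expectation (row_pmf N p u q)
      (\<lambda>\<rho>. exp (\<mu> * outcome_value \<psi> Sd \<rho> - \<theta> * (\<Sum>k\<in>S. item_score \<psi> Sd k \<rho>)))
   = exp (- \<mu> * \<psi>) * (1 - p + p * exp (\<theta> * \<psi>)) ^ card S
     + ((1 - q) * (1 - p * (1 - u)) ^ card Sd) * (exp \<mu> * (1 - p + p * exp (- \<theta>)) ^ card S
         - exp (- \<mu> * \<psi>) * (1 - p + p * exp (\<theta> * \<psi>)) ^ card S)"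
proof -
  let ?Pp = "\<lambda>\<rho>. \<Prod>k\<in>S. if fst (fst \<rho> k) then exp (\<theta> * \<psi>) else 1"
  let ?Pm = "\<lambda>\<rho>. \<Prod>k\<in>S. if fst (fst \<rho> k) then exp (- \<theta>) else 1"
  let ?I = "\<lambda>\<rho>. if row_positive Sd \<rho> then 0 else 1 :: real"
  have fin_S: "finite S"
    using S(1) finite_subset by blast
  have "(\<lambda>\<rho>. exp (\<mu> * outcome_value \<psi> Sd \<rho> - \<theta> * (\<Sum>k\<in>S. item_score \<psi> Sd k \<rho>))) =
     (\<lambda>\<rho>. exp (- \<mu> * \<psi>) * ?Pp \<rho> + exp \<mu> * (?I \<rho> * ?Pm \<rho>) - exp (- \<mu> * \<psi>) * (?I \<rho> * ?Pp \<rho>))"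
  proof
    fix \<rho>
    have "exp (\<mu> * outcome_value \<psi> Sd \<rho> - \<theta> * (\<Sum>k\<in>S. item_score \<psi> Sd k \<rho>)) =
        exp (\<mu> * outcome_value \<psi> Sd \<rho>) * (\<Prod>k\<in>S. exp (- \<theta> * item_score \<psi> Sd k \<rho>))"
    proof -
      have "\<mu> * outcome_value \<psi> Sd \<rho> - \<theta> * (\<Sum>k\<in>S. item_score \<psi> Sd k \<rho>) =
          \<mu> * outcome_value \<psi> Sd \<rho> + (\<Sum>k\<in>S. - \<theta> * item_score \<psi> Sd k \<rho>)"
        by (simp add: sum_distrib_left sum_negf)
      then show ?thesis
        by (simp only: exp_add exp_sum[OF fin_S])
    qed
    also have "\<dots> = exp (- \<mu> * \<psi>) * ?Pp \<rho> + exp \<mu> * (?I \<rho> * ?Pm \<rho>) - exp (- \<mu> * \<psi>) * (?I \<rho> * ?Pp \<rho>)"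
      by (cases "row_positive Sd \<rho>") (auto simp: outcome_value_def item_score_def intro!: prod.cong)
    finally show "exp (\<mu> * outcome_value \<psi> Sd \<rho> - \<theta> * (\<Sum>k\<in>S. item_score \<psi> Sd k \<rho>)) =
      exp (- \<mu> * \<psi>) * ?Pp \<rho> + exp \<mu> * (?I \<rho> * ?Pm \<rho>) - exp (- \<mu> * \<psi>) * (?I \<rho> * ?Pp \<rho>)" .
  qed
  then show ?thesis
    by (simp add: expectation_prod_tested[OF S(1)] expectation_negative_prod_tested[OF S]
        algebra_simps)
qed

end

section \<open>Elementary exponential inequalities\<close>

lemma exp_minus_le_quadratic:
  fixes x :: real
  assumes "0 \<le> x"
  shows "exp (- x) \<le> 1 - x + x\<^sup>2"
proof -
  have "1 \<le> (1 + x) * (1 - x + x\<^sup>2)"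
    using assms by (simp add: algebra_simps power2_eq_square)
  then have "1 / (1 + x) \<le> 1 - x + x\<^sup>2"
    using assms by (simp add: field_simps)
  moreover have "exp (- x) \<le> 1 / (1 + x)"
    using exp_ge_add_one_self[of x] assms by (simp add: exp_minus field_simps)
  ultimately show ?thesis
    by linarith
qed

lemma exp_mult_le_quadratic:
  fixes \<theta> \<psi> :: real
  assumes "0 \<le> \<theta>" "\<theta> \<le> 1" "0 \<le> \<psi>" "\<psi> \<le> 1"
  shows "exp (\<theta> * \<psi>) \<le> 1 + \<theta> * \<psi> + \<theta>\<^sup>2"
proof -
  have "exp (\<theta> * \<psi>) \<le> 1 + \<theta> * \<psi> + (\<theta> * \<psi>)\<^sup>2"
    using assms by (intro exp_bound) (auto simp: mult_le_one)
  moreover have "(\<theta> * \<psi>)\<^sup>2 \<le> \<theta>\<^sup>2"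
    using assms by (intro power_mono) (auto simp: mult_left_le)
  ultimately show ?thesis
    by linarith
qed

lemma two_point_mgf_le:
  fixes G \<psi> \<theta> :: real
  assumes G: "0 \<le> G" "G \<le> 1" and \<psi>: "0 \<le> \<psi>" "\<psi> \<le> 1" and \<theta>: "0 \<le> \<theta>" "\<theta> \<le> 1"
  shows "exp (\<theta> * \<psi>) + (exp (- \<theta>) - exp (\<theta> * \<psi>)) * G \<le> exp (- \<theta> * (G - (1 - G) * \<psi>) + \<theta>\<^sup>2)"
proof -
  have "exp (\<theta> * \<psi>) + (exp (- \<theta>) - exp (\<theta> * \<psi>)) * G = G * exp (- \<theta>) + (1 - G) * exp (\<theta> * \<psi>)"
    by (simp add: algebra_simps)
  also have "\<dots> \<le> G * (1 - \<theta> + \<theta>\<^sup>2) + (1 - G) * (1 + \<theta> * \<psi> + \<theta>\<^sup>2)"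
    using G \<psi> \<theta> exp_minus_le_quadratic[of \<theta>] exp_mult_le_quadratic[of \<theta> \<psi>]
    by (intro add_mono mult_left_mono) auto
  also have "\<dots> = 1 + (- \<theta> * (G - (1 - G) * \<psi>) + \<theta>\<^sup>2)"
    by (simp add: algebra_simps)
  also have "\<dots> \<le> exp (- \<theta> * (G - (1 - G) * \<psi>) + \<theta>\<^sup>2)"
    by (rule exp_ge_add_one_self)
  finally show ?thesis .
qed

lemma thinned_two_point_mgf_le:
  fixes s \<psi> \<theta> p :: real
  assumes s: "0 \<le> s" "s \<le> 1" and \<psi>: "0 \<le> \<psi>" "\<psi> \<le> 1" and \<theta>: "0 \<le> \<theta>" "\<theta> \<le> 1" and p: "0 \<le> p"
  shows "1 + (exp (- \<theta> * \<psi>) - 1) * p + (exp \<theta> - exp (- \<theta> * \<psi>)) * (p * s)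
     \<le> exp (p * (\<theta> * (s - (1 - s) * \<psi>) + \<theta>\<^sup>2))"
proof -
  have "(1 - s) * exp (- (\<theta> * \<psi>)) + s * exp \<theta> - 1
      \<le> (1 - s) * (1 - \<theta> * \<psi> + \<theta>\<^sup>2) + s * (1 + \<theta> + \<theta>\<^sup>2) - 1"
  proof -
    have "exp (- (\<theta> * \<psi>)) \<le> 1 - \<theta> * \<psi> + (\<theta> * \<psi>)\<^sup>2"
      using \<theta> \<psi> by (intro exp_minus_le_quadratic) auto
    moreover have "(\<theta> * \<psi>)\<^sup>2 \<le> \<theta>\<^sup>2"
      using \<theta> \<psi> by (intro power_mono) (auto simp: mult_left_le)
    moreover have "exp \<theta> \<le> 1 + \<theta> + \<theta>\<^sup>2"
      using \<theta> by (intro exp_bound) auto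
    ultimately show ?thesis
      using s by (intro diff_right_mono add_mono mult_left_mono) auto
  qed
  also have "\<dots> = \<theta> * (s - (1 - s) * \<psi>) + \<theta>\<^sup>2"
    by (simp add: algebra_simps)
  finally have *: "(1 - s) * exp (- (\<theta> * \<psi>)) + s * exp \<theta> - 1 \<le> \<theta> * (s - (1 - s) * \<psi>) + \<theta>\<^sup>2" .
  have "1 + (exp (- \<theta> * \<psi>) - 1) * p + (exp \<theta> - exp (- \<theta> * \<psi>)) * (p * s)
      = 1 + p * ((1 - s) * exp (- (\<theta> * \<psi>)) + s * exp \<theta> - 1)"
    by (simp add: algebra_simps)
  also have "\<dots> \<le> 1 + p * (\<theta> * (s - (1 - s) * \<psi>) + \<theta>\<^sup>2)"
    using * p by (intro add_left_mono mult_left_mono) auto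
  also have "\<dots> \<le> exp (p * (\<theta> * (s - (1 - s) * \<psi>) + \<theta>\<^sup>2))"
    by (rule exp_ge_add_one_self)
  finally show ?thesis .
qed

lemma binomial_factor_le_exp:
  fixes p x :: real
  assumes "0 \<le> p" "exp x \<le> 1 + x + y"
  shows "1 - p + p * exp x \<le> exp (p * (x + y))"
proof -
  have "1 - p + p * exp x \<le> 1 + p * (x + y)"
    using assms mult_left_mono[of "exp x" "1 + x + y" p] by (simp add: algebra_simps)
  also have "\<dots> \<le> exp (p * (x + y))"
    by (rule exp_ge_add_one_self)
  finally show ?thesis .
qed

lemma binomial_mgf_mix_le:
  fixes G \<psi> \<theta> p :: real and m :: nat
  assumes G: "0 \<le> G" "G \<le> 1" and \<psi>: "0 \<le> \<psi>" "\<psi> \<le> 1" and \<theta>: "0 \<le> \<theta>" "\<theta> \<le> 1"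
    and p: "0 \<le> p" "p \<le> 1"
  shows "exp (- (m * p * \<theta>) * \<psi>) * (1 - p + p * exp (\<theta> * \<psi>)) ^ m
     + G * (exp (m * p * \<theta>) * (1 - p + p * exp (- \<theta>)) ^ m
         - exp (- (m * p * \<theta>) * \<psi>) * (1 - p + p * exp (\<theta> * \<psi>)) ^ m) \<le> exp (m * p * \<theta>\<^sup>2)"
proof -
  let ?X = "exp (- (m * p * \<theta>) * \<psi>) * (1 - p + p * exp (\<theta> * \<psi>)) ^ m"
  let ?Y = "exp (m * p * \<theta>) * (1 - p + p * exp (- \<theta>)) ^ m"
  have "1 - p + p * exp (- \<theta>) \<le> exp (p * (- \<theta> + \<theta>\<^sup>2))"
    using p \<theta> exp_minus_le_quadratic[of \<theta>] by (intro binomial_factor_le_exp) auto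
  then have "(1 - p + p * exp (- \<theta>)) ^ m \<le> exp (p * (- \<theta> + \<theta>\<^sup>2)) ^ m"
    using p by (intro power_mono) auto
  then have "?Y \<le> exp (m * p * \<theta>) * exp (p * (- \<theta> + \<theta>\<^sup>2)) ^ m"
    by (intro mult_left_mono) auto
  also have "\<dots> = exp (m * p * \<theta>\<^sup>2)"
    by (simp add: exp_of_nat_mult[symmetric] exp_add[symmetric] algebra_simps)
  finally have Y: "?Y \<le> exp (m * p * \<theta>\<^sup>2)" .
  have "1 - p + p * exp (\<theta> * \<psi>) \<le> exp (p * (\<theta> * \<psi> + \<theta>\<^sup>2))"
    using p \<theta> \<psi> exp_mult_le_quadratic[of \<theta> \<psi>] by (intro binomial_factor_le_exp) auto
  then have "(1 - p + p * exp (\<theta> * \<psi>)) ^ m \<le> exp (p * (\<theta> * \<psi> + \<theta>\<^sup>2)) ^ m"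
    using p by (intro power_mono) auto
  then have "?X \<le> exp (- (m * p * \<theta>) * \<psi>) * exp (p * (\<theta> * \<psi> + \<theta>\<^sup>2)) ^ m"
    by (intro mult_left_mono) auto
  also have "\<dots> = exp (m * p * \<theta>\<^sup>2)"
    by (simp add: exp_of_nat_mult[symmetric] exp_add[symmetric] algebra_simps)
  finally have X: "?X \<le> exp (m * p * \<theta>\<^sup>2)" .
  have "?X + G * (?Y - ?X) = (1 - G) * ?X + G * ?Y"
    by (simp add: algebra_simps)
  also have "\<dots> \<le> (1 - G) * exp (m * p * \<theta>\<^sup>2) + G * exp (m * p * \<theta>\<^sup>2)"
    using G X Y by (intro add_mono mult_left_mono) auto
  also have "\<dots> = exp (m * p * \<theta>\<^sup>2)"
    by (simp add: algebra_simps)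
  finally show ?thesis .
qed

lemma mult_exp_minus_le:
  fixes x c E :: real
  assumes "1 \<le> x" "0 \<le> c" "(1 + c) * ln x \<le> E"
  shows "x * exp (- E) \<le> exp (- c * ln x)"
proof -
  have "x * exp (- E) = exp (ln x - E)"
    using assms(1) by (simp add: exp_diff exp_minus field_simps)
  also have "\<dots> \<le> exp (- c * ln x)"
    using assms by (simp add: algebra_simps)
  finally show ?thesis .
qed

lemma one_plus_mult_exp_minus_lt:
  fixes x c E :: real
  assumes x: "2 \<le> x" and c: "0 \<le> c" and E: "2 * (1 + c) * ln x \<le> E"
  shows "(1 + x) * exp (- E) < exp (- c * ln x)"
proof -
  have "2 * x \<le> x * x"
    using x by (intro mult_right_mono) auto
  then have "1 + x < x\<^sup>2"
    using x unfolding power2_eq_square by linarith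
  then have "(1 + x) * exp (- E) < x\<^sup>2 * exp (- E)"
    by (intro mult_strict_right_mono) auto
  also have "\<dots> \<le> exp (- c * ln (x\<^sup>2))"
    using x c E by (intro mult_exp_minus_le) (auto simp: ln_realpow algebra_simps)
  also have "\<dots> \<le> exp (- c * ln x)"
    using x c by (simp add: ln_realpow)
  finally show ?thesis .
qed

lemma one_minus_inverse_power_le:
  assumes "1 \<le> n"
  shows "(1 - 1 / real n) ^ n \<le> 1 / 2"
proof -
  have "(1 - 1 / real n) ^ n \<le> exp (- 1 / real n) ^ n"
    using exp_ge_add_one_self[of "- 1 / real n"] assms by (intro power_mono) auto
  also have "\<dots> = exp (- 1)"
    using assms by (simp add: exp_of_nat_mult[symmetric])
  also have "\<dots> \<le> 1 / 2"
    using exp_ge_add_one_self[of 1] by (simp add: exp_minus field_simps)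
  finally show ?thesis .
qed

lemma one_minus_inverse_power_ge:
  assumes "2 \<le> n"
  shows "1 / 9 \<le> (1 - 1 / real n) ^ n"
proof -
  have x: "0 \<le> 1 / real n" "1 / real n \<le> 1 / 2"
    using assms by auto
  have "real n * (- (1 / real n) - 2 * (1 / real n)\<^sup>2) \<le> real n * ln (1 - 1 / real n)"
    using ln_one_minus_pos_lower_bound[OF x] by (intro mult_left_mono) auto
  moreover have "real n * (- (1 / real n) - 2 * (1 / real n)\<^sup>2) = - 1 - 2 / real n"
    using assms by (simp add: field_simps power2_eq_square)
  moreover have "- 2 \<le> - 1 - 2 / real n"
    using assms by (simp add: field_simps)
  ultimately have "exp (- 2) \<le> exp (real n * ln (1 - 1 / real n))"
    by simp
  also have "\<dots> = (1 - 1 / real n) ^ n"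
    using assms by (simp add: exp_of_nat_mult)
  finally have "exp (- 2) \<le> (1 - 1 / real n) ^ n" .
  moreover have "1 / 9 \<le> exp (- 2 :: real)"
  proof -
    have "exp (2 :: real) = exp 1 * exp 1"
      by (simp add: exp_add[symmetric])
    also have "\<dots> \<le> 3 * 3"
      using exp_le by (intro mult_mono) auto
    finally show ?thesis
      by (simp add: exp_minus field_simps)
  qed
  ultimately show ?thesis
    by linarith
qed

section \<open>Chernoff bounds for CoLpAl\<close>

text \<open>
  \<open>\<Gamma>\<close> is the probability that a test is negative, and \<open>p \<sigma>\<close> the probability that it is negative
  although it contains a given defective.  Hence a defective item has expected weight
  \<open>M p \<nu>\<close> and a non-defective one at least \<open>M p (\<nu> + \<delta>)\<close>; the threshold \<open>t0\<close> lies in between.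
\<close>

locale colpal_setting =
  fixes N L M :: nat and Sd :: "nat set" and u q :: real
  assumes Sd: "Sd \<subseteq> {..<N}" and K_gt_1: "1 < card Sd" and L_ge_1: "1 \<le> L"
    and L_le: "L \<le> N - card Sd" and u: "0 \<le> u" "u < 1 / 2" and q: "0 \<le> q" "q < 1 / 2"
begin

abbreviation "K \<equiv> card Sd"

definition "p = 1 / ((1 - u) * real K)"
definition "a = 1 - (1 - u) * p"
definition "\<Gamma> = (1 - q) * a ^ K"
definition "\<gamma>0 = u / a"
definition "\<psi>0 = min (\<gamma>0 * \<Gamma> / (1 - \<gamma>0 * \<Gamma>)) (\<Gamma> / (2 * (1 - \<Gamma>)))"
definition "\<sigma> = \<gamma>0 * \<Gamma>"
definition "\<delta> = (1 - \<gamma>0) * \<Gamma>"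
definition "\<nu> = \<sigma> - (1 - \<sigma>) * \<psi>0"
definition "t0 = M * p * (\<nu> + \<delta> / 4)"
definition "V0 = M * (\<nu> + 3 * \<delta> / 8)"
definition "E0 = M * p * \<delta>\<^sup>2 / 256"

lemma K_ge_2: "2 \<le> real K"
  using K_gt_1 by simp

lemma p_pos: "0 < p"
  using u K_gt_1 by (simp add: p_def)

lemma p_le_1: "p \<le> 1"
proof -
  have "1 / 2 * 2 \<le> (1 - u) * real K"
    using u K_ge_2 by (intro mult_mono) auto
  then show ?thesis
    by (simp add: p_def)
qed

lemma a_eq: "a = 1 - 1 / real K"
  using u K_gt_1 by (simp add: a_def p_def field_simps)

lemma a_bounds: "1 / 2 \<le> a" "a < 1"
  using K_ge_2 by (auto simp: a_eq field_simps)

lemma \<Gamma>_bounds: "1 / 18 \<le> \<Gamma>" "\<Gamma> \<le> 1 / 2"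
proof -
  have "1 / 2 * (1 / 9) \<le> (1 - q) * a ^ K"
    using one_minus_inverse_power_ge[of K] K_gt_1 q by (intro mult_mono) (auto simp: a_eq)
  then show "1 / 18 \<le> \<Gamma>"
    by (simp add: \<Gamma>_def)
  have "(1 - q) * a ^ K \<le> 1 * (1 / 2)"
    using one_minus_inverse_power_le[of K] K_gt_1 q a_bounds by (intro mult_mono) (auto simp: a_eq)
  then show "\<Gamma> \<le> 1 / 2"
    by (simp add: \<Gamma>_def)
qed

lemma \<gamma>0_bounds: "0 \<le> \<gamma>0" "\<gamma>0 < 1"
  using u a_bounds by (auto simp: \<gamma>0_def field_simps)

lemma \<sigma>_bounds: "0 \<le> \<sigma>" "\<sigma> < 1"
proof -
  show "0 \<le> \<sigma>"
    using \<gamma>0_bounds \<Gamma>_bounds by (simp add: \<sigma>_def)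
  have "\<sigma> \<le> \<Gamma>"
    using \<gamma>0_bounds \<Gamma>_bounds mult_right_mono[of \<gamma>0 1 \<Gamma>] by (simp add: \<sigma>_def)
  then show "\<sigma> < 1"
    using \<Gamma>_bounds by simp
qed

lemma defective_negative_prob_eq: "(1 - q) * (p * u) * (1 - p * (1 - u)) ^ (K - 1) = p * \<sigma>"
proof -
  have aK: "a ^ K = a * a ^ (K - 1)"
    using K_gt_1 by (simp add: power_eq_if)
  have "1 - p * (1 - u) = a"
    by (simp add: a_def mult.commute)
  moreover have a0: "a \<noteq> 0"
    using a_bounds by simp
  then have "p * (u / a * ((1 - q) * (a * a ^ (K - 1)))) = (1 - q) * (p * u) * a ^ (K - 1)"
    by (simp add: field_simps)
  ultimately show ?thesis
    unfolding \<sigma>_def \<gamma>0_def \<Gamma>_def aK using a0 by simp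
qed

lemma \<psi>0_bounds: "0 \<le> \<psi>0" "\<psi>0 \<le> 1" "(1 - \<sigma>) * \<psi>0 \<le> \<sigma>"
proof -
  show "0 \<le> \<psi>0"
    using \<sigma>_bounds \<Gamma>_bounds by (simp add: \<psi>0_def \<sigma>_def[symmetric])
  have "\<psi>0 \<le> \<Gamma> / (2 * (1 - \<Gamma>))"
    by (simp add: \<psi>0_def)
  also have "\<dots> \<le> 1"
    using \<Gamma>_bounds by (simp add: field_simps)
  finally show "\<psi>0 \<le> 1" .
  have "\<psi>0 \<le> \<sigma> / (1 - \<sigma>)"
    by (simp add: \<psi>0_def \<sigma>_def)
  then show "(1 - \<sigma>) * \<psi>0 \<le> \<sigma>"
    using \<sigma>_bounds by (simp add: field_simps)
qed

lemma \<delta>_bounds: "0 < \<delta>" "\<delta> \<le> 1" "(1 - \<gamma>0) / 18 \<le> \<delta>"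
proof -
  have g: "0 < 1 - \<gamma>0" "1 - \<gamma>0 \<le> 1"
    using \<gamma>0_bounds by auto
  show "0 < \<delta>" "\<delta> \<le> 1"
    unfolding \<delta>_def using g \<Gamma>_bounds by (auto intro: mult_pos_pos mult_le_one)
  have "(1 - \<gamma>0) * (1 / 18) \<le> (1 - \<gamma>0) * \<Gamma>"
    using g \<Gamma>_bounds by (intro mult_left_mono) auto
  then show "(1 - \<gamma>0) / 18 \<le> \<delta>"
    by (simp add: \<delta>_def)
qed

lemma nondefective_gap: "\<nu> + \<delta> \<le> \<Gamma> - (1 - \<Gamma>) * \<psi>0"
proof -
  have "\<Gamma> - (1 - \<Gamma>) * \<psi>0 - \<nu> = \<delta> * (1 + \<psi>0)"
    by (simp add: \<nu>_def \<sigma>_def \<delta>_def algebra_simps)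
  moreover have "\<delta> * 1 \<le> \<delta> * (1 + \<psi>0)"
    using \<delta>_bounds(1) \<psi>0_bounds(1) by (intro mult_left_mono) auto
  ultimately show ?thesis
    by linarith
qed

lemma t0_nonneg: "0 \<le> t0"
  using p_pos \<psi>0_bounds(3) \<delta>_bounds(1) unfolding t0_def \<nu>_def by simp

abbreviation rows :: "(nat \<Rightarrow> (nat \<Rightarrow> bool \<times> bool) \<times> bool) pmf" where
  "rows \<equiv> Pi_pmf {..<M} (\<lambda>_. (False, False), False) (\<lambda>_. row_pmf N p u q)"

definition score :: "nat \<Rightarrow> (nat \<Rightarrow> (nat \<Rightarrow> bool \<times> bool) \<times> bool) \<Rightarrow> real" where
  "score k r = (\<Sum>l<M. item_score \<psi>0 Sd k (r l))"

definition total_value :: "(nat \<Rightarrow> (nat \<Rightarrow> bool \<times> bool) \<times> bool) \<Rightarrow> real" where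
  "total_value r = (\<Sum>l<M. outcome_value \<psi>0 Sd (r l))"

definition separated :: "(nat \<Rightarrow> (nat \<Rightarrow> bool \<times> bool) \<times> bool) \<Rightarrow> bool" where
  "separated r \<longleftrightarrow> (\<forall>d\<in>Sd. score d r < t0) \<and> L \<le> card {k\<in>{..<N} - Sd. t0 < score k r}"

definition "m0 = N - K - (L - 1)"

definition "small_sets = {S. S \<subseteq> {..<N} - Sd \<and> card S = m0}"

lemma finite_Sd: "finite Sd"
  using Sd finite_subset by blast

lemma prob_separated_le_success:
  "measure_pmf.prob rows {r. separated r} \<le>
   measure_pmf.prob (gt_dist M N p u q) {(X, D, W). colpal_success M N L Sd \<psi>0 X D W}"
proof -
  have "measure_pmf.prob rows {r. separated r} =
      measure_pmf.prob (gt_dist M N p u q) (rows_of -` {r. separated r})"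
    by (simp flip: map_rows_of_gt_dist)
  also have "\<dots> \<le> measure_pmf.prob (gt_dist M N p u q) {(X, D, W). colpal_success M N L Sd \<psi>0 X D W}"
  proof (rule measure_pmf.finite_measure_mono)
    show "rows_of -` {r. separated r} \<subseteq> {(X, D, W). colpal_success M N L Sd \<psi>0 X D W}"
    proof (clarsimp)
      fix X D W
      assume "separated (rows_of (X, D, W))"
      then show "colpal_success M N L Sd \<psi>0 X D W"
        using Sd t0_nonneg
        by (intro colpal_success_if_weights_separated)
          (auto simp: separated_def score_def lp2_weight_eq_sum_item_score)
    qed
  qed simp
  finally show ?thesis .
qed

lemma not_separated_cases:
  assumes "\<not> separated r"
  obtains "total_value r < V0"
    | d where "d \<in> Sd" "t0 \<le> score d r"
    | S where "S \<in> small_sets" "V0 \<le> total_value r" "\<forall>k\<in>S. score k r \<le> t0"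
proof (cases "\<exists>d\<in>Sd. t0 \<le> score d r")
  case True
  then show thesis
    using that(2) by blast
next
  case defective: False
  show thesis
  proof (cases "total_value r < V0")
    case True
    then show thesis
      by (rule that(1))
  next
    case False
    let ?A = "{k\<in>{..<N} - Sd. t0 < score k r}"
    let ?B = "{k\<in>{..<N} - Sd. score k r \<le> t0}"
    have "card ({..<N} - Sd) = card (?A \<union> ?B)"
      by (rule arg_cong[where f = card]) auto
    also have "\<dots> = card ?A + card ?B"
      by (rule card_Un_disjoint) auto
    finally have "card ({..<N} - Sd) = card ?A + card ?B" .
    moreover have "card ({..<N} - Sd) = N - K"
      using card_Diff_subset[OF finite_Sd Sd] by simp
    moreover have "card ?A < L"
    proof -
      have "\<forall>d\<in>Sd. score d r < t0"
        using defective by (simp add: not_le)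
      then show ?thesis
        using assms unfolding separated_def by linarith
    qed
    ultimately have "m0 \<le> card ?B"
      using L_ge_1 by (simp add: m0_def)
    then obtain S where S: "S \<subseteq> ?B" "card S = m0"
      by (rule obtain_subset_with_card_n)
    show thesis
    proof (rule that(3))
      show "S \<in> small_sets"
        using S unfolding small_sets_def by blast
      show "V0 \<le> total_value r"
        using False by simp
      show "\<forall>k\<in>S. score k r \<le> t0"
        using S by blast
    qed
  qed
qed

lemma mgf_outcome_value_le:
  assumes "0 \<le> \<theta>" "\<theta> \<le> 1"
  shows "measure_pmf.expectation (row_pmf N p u q) (\<lambda>\<rho>. exp (- \<theta> * outcome_value \<psi>0 Sd \<rho>))
    \<le> exp (- \<theta> * (\<Gamma> - (1 - \<Gamma>) * \<psi>0) + \<theta>\<^sup>2)"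
proof -
  have "measure_pmf.expectation (row_pmf N p u q) (\<lambda>\<rho>. exp (- \<theta> * outcome_value \<psi>0 Sd \<rho>))
      = exp (\<theta> * \<psi>0) + (exp (- \<theta>) - exp (\<theta> * \<psi>0)) * \<Gamma>"
    using mgf_outcome_value[of p u q Sd N \<theta> \<psi>0] p_pos p_le_1 u q Sd
    by (simp add: \<Gamma>_def a_def mult.commute)
  also have "\<dots> \<le> exp (- \<theta> * (\<Gamma> - (1 - \<Gamma>) * \<psi>0) + \<theta>\<^sup>2)"
    by (rule two_point_mgf_le) (use \<Gamma>_bounds \<psi>0_bounds assms in auto)
  finally show ?thesis .
qed

lemma mgf_defective_score_le:
  assumes "d \<in> Sd" "0 \<le> \<theta>" "\<theta> \<le> 1"
  shows "measure_pmf.expectation (row_pmf N p u q) (\<lambda>\<rho>. exp (\<theta> * item_score \<psi>0 Sd d \<rho>))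
    \<le> exp (p * (\<theta> * \<nu> + \<theta>\<^sup>2))"
proof -
  have "measure_pmf.expectation (row_pmf N p u q) (\<lambda>\<rho>. exp (\<theta> * item_score \<psi>0 Sd d \<rho>))
      = 1 + (exp (- \<theta> * \<psi>0) - 1) * p + (exp \<theta> - exp (- \<theta> * \<psi>0)) * (p * \<sigma>)"
    using mgf_defective_score[of p u q Sd N d \<theta> \<psi>0] p_pos p_le_1 u q Sd assms(1)
      defective_negative_prob_eq by simp
  also have "\<dots> \<le> exp (p * (\<theta> * \<nu> + \<theta>\<^sup>2))"
    unfolding \<nu>_def by (rule thinned_two_point_mgf_le) (use \<sigma>_bounds \<psi>0_bounds assms p_pos in auto)
  finally show ?thesis .
qed

lemma mgf_small_set_le:
  assumes "S \<in> small_sets" "0 \<le> \<theta>" "\<theta> \<le> 1"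
  shows "measure_pmf.expectation (row_pmf N p u q) (\<lambda>\<rho>.
      exp (m0 * p * \<theta> * outcome_value \<psi>0 Sd \<rho> - \<theta> * (\<Sum>k\<in>S. item_score \<psi>0 Sd k \<rho>)))
    \<le> exp (m0 * p * \<theta>\<^sup>2)"
proof -
  have S: "S \<subseteq> {..<N}" "S \<inter> Sd = {}" "card S = m0"
    using assms(1) by (auto simp: small_sets_def)
  have "measure_pmf.expectation (row_pmf N p u q) (\<lambda>\<rho>.
      exp (m0 * p * \<theta> * outcome_value \<psi>0 Sd \<rho> - \<theta> * (\<Sum>k\<in>S. item_score \<psi>0 Sd k \<rho>)))
     = exp (- (real m0 * p * \<theta>) * \<psi>0) * (1 - p + p * exp (\<theta> * \<psi>0)) ^ m0
     + \<Gamma> * (exp (real m0 * p * \<theta>) * (1 - p + p * exp (- \<theta>)) ^ m0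
         - exp (- (real m0 * p * \<theta>) * \<psi>0) * (1 - p + p * exp (\<theta> * \<psi>0)) ^ m0)"
    using mgf_outcome_minus_scores[of p u q Sd N S \<theta> "m0 * p * \<theta>" \<psi>0] p_pos p_le_1 u q Sd S assms
    by (simp add: \<Gamma>_def a_def mult.commute)
  also have "\<dots> \<le> exp (m0 * p * \<theta>\<^sup>2)"
    by (rule binomial_mgf_mix_le) (use \<Gamma>_bounds \<psi>0_bounds assms p_pos p_le_1 in auto)
  finally show ?thesis .
qed

lemma prob_total_value_less: "measure_pmf.prob rows {r. total_value r < V0} \<le> exp (- E0)"
proof -
  define \<theta> where "\<theta> = \<delta> / 16"
  have \<theta>: "0 \<le> \<theta>" "\<theta> \<le> 1"
    using \<delta>_bounds by (auto simp: \<theta>_def)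
  have "{r. total_value r < V0} \<subseteq> {r. - \<theta> * V0 \<le> (\<Sum>l\<in>{..<M}. - \<theta> * outcome_value \<psi>0 Sd (r l))}"
  proof
    fix r
    assume "r \<in> {r. total_value r < V0}"
    then have "\<theta> * total_value r \<le> \<theta> * V0"
      using \<theta> by (intro mult_left_mono) auto
    then show "r \<in> {r. - \<theta> * V0 \<le> (\<Sum>l\<in>{..<M}. - \<theta> * outcome_value \<psi>0 Sd (r l))}"
      by (simp add: total_value_def sum_distrib_left sum_negf)
  qed
  then have "measure_pmf.prob rows {r. total_value r < V0} \<le>
      measure_pmf.prob rows {r. - \<theta> * V0 \<le> (\<Sum>l\<in>{..<M}. - \<theta> * outcome_value \<psi>0 Sd (r l))}"
    by (rule measure_pmf.finite_measure_mono) simp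
  also have "\<dots> \<le> exp (real (card {..<M}) * (- \<theta> * (\<Gamma> - (1 - \<Gamma>) * \<psi>0) + \<theta>\<^sup>2) - - \<theta> * V0)"
    by (rule prob_Pi_pmf_sum_ge[OF finite_lessThan finite_set_row_pmf mgf_outcome_value_le[OF \<theta>]])
  also have "\<dots> \<le> exp (- E0)"
  proof -
    have "real M * (- \<theta> * (\<Gamma> - (1 - \<Gamma>) * \<psi>0) + \<theta>\<^sup>2) + \<theta> * V0
        = (M * \<theta>) * ((\<nu> + 3 * \<delta> / 8) - (\<Gamma> - (1 - \<Gamma>) * \<psi>0) + \<theta>)"
      by (simp add: V0_def algebra_simps power2_eq_square)
    also have "\<dots> \<le> (M * \<theta>) * (- 5 * \<delta> / 8 + \<theta>)"
      using nondefective_gap \<theta> by (intro mult_left_mono) auto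
    also have "\<dots> = - 9 * (M * \<delta>\<^sup>2) / 256"
      by (simp add: \<theta>_def power2_eq_square algebra_simps)
    also have "\<dots> \<le> - E0"
    proof -
      have "real M * p * \<delta>\<^sup>2 \<le> real M * \<delta>\<^sup>2"
        using p_le_1 by (intro mult_right_mono mult_left_le) auto
      moreover have "0 \<le> real M * \<delta>\<^sup>2"
        by simp
      ultimately show ?thesis
        unfolding E0_def by linarith
    qed
    finally show ?thesis
      by simp
  qed
  finally show ?thesis .
qed

lemma prob_defective_score_ge:
  assumes d: "d \<in> Sd"
  shows "measure_pmf.prob rows {r. t0 \<le> score d r} \<le> exp (- E0)"
proof -
  define \<theta> where "\<theta> = \<delta> / 8"
  have \<theta>: "0 \<le> \<theta>" "\<theta> \<le> 1"
    using \<delta>_bounds by (auto simp: \<theta>_def)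
  have "{r. t0 \<le> score d r} \<subseteq> {r. \<theta> * t0 \<le> (\<Sum>l\<in>{..<M}. \<theta> * item_score \<psi>0 Sd d (r l))}"
    using \<theta> by (auto simp: score_def sum_distrib_left[symmetric] intro: mult_left_mono)
  then have "measure_pmf.prob rows {r. t0 \<le> score d r} \<le>
      measure_pmf.prob rows {r. \<theta> * t0 \<le> (\<Sum>l\<in>{..<M}. \<theta> * item_score \<psi>0 Sd d (r l))}"
    by (rule measure_pmf.finite_measure_mono) simp
  also have "\<dots> \<le> exp (real (card {..<M}) * (p * (\<theta> * \<nu> + \<theta>\<^sup>2)) - \<theta> * t0)"
    by (rule prob_Pi_pmf_sum_ge[OF finite_lessThan finite_set_row_pmf mgf_defective_score_le[OF d \<theta>]])
  also have "real (card {..<M}) * (p * (\<theta> * \<nu> + \<theta>\<^sup>2)) - \<theta> * t0 = - (4 * E0)"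
    by (simp add: t0_def \<theta>_def E0_def power2_eq_square algebra_simps)
  also have "exp (- (4 * E0)) \<le> exp (- E0)"
    using p_pos by (simp add: E0_def)
  finally show ?thesis .
qed

lemma prob_small_set_scores_le:
  assumes S: "S \<in> small_sets"
  shows "measure_pmf.prob rows {r. V0 \<le> total_value r \<and> (\<forall>k\<in>S. score k r \<le> t0)}
    \<le> exp (- (m0 * E0))"
proof -
  define \<theta> where "\<theta> = \<delta> / 16"
  define \<mu> where "\<mu> = real m0 * p * \<theta>"
  have \<theta>: "0 \<le> \<theta>" "\<theta> \<le> 1"
    using \<delta>_bounds by (auto simp: \<theta>_def)
  have \<mu>: "0 \<le> \<mu>"
    using \<theta> p_pos by (simp add: \<mu>_def)
  define g where "g \<rho> = \<mu> * outcome_value \<psi>0 Sd \<rho> - \<theta> * (\<Sum>k\<in>S. item_score \<psi>0 Sd k \<rho>)" for \<rho>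
  have "{r. V0 \<le> total_value r \<and> (\<forall>k\<in>S. score k r \<le> t0)} \<subseteq>
      {r. \<mu> * V0 - \<theta> * (m0 * t0) \<le> (\<Sum>l\<in>{..<M}. g (r l))}"
  proof
    fix r
    assume r: "r \<in> {r. V0 \<le> total_value r \<and> (\<forall>k\<in>S. score k r \<le> t0)}"
    have "(\<Sum>k\<in>S. score k r) \<le> real (card S) * t0"
      using r by (intro sum_bounded_above) auto
    then have "\<theta> * (\<Sum>k\<in>S. score k r) \<le> \<theta> * (m0 * t0)"
      using \<theta> S by (intro mult_left_mono) (auto simp: small_sets_def)
    moreover have "\<mu> * V0 \<le> \<mu> * total_value r"
      using r \<mu> by (intro mult_left_mono) auto
    moreover have "(\<Sum>l\<in>{..<M}. g (r l)) = \<mu> * total_value r - \<theta> * (\<Sum>k\<in>S. score k r)"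
      unfolding g_def total_value_def score_def
      by (simp add: sum_subtractf sum_distrib_left sum.swap[of _ S])
    ultimately show "r \<in> {r. \<mu> * V0 - \<theta> * (m0 * t0) \<le> (\<Sum>l\<in>{..<M}. g (r l))}"
      by simp
  qed
  then have "measure_pmf.prob rows {r. V0 \<le> total_value r \<and> (\<forall>k\<in>S. score k r \<le> t0)} \<le>
      measure_pmf.prob rows {r. \<mu> * V0 - \<theta> * (m0 * t0) \<le> (\<Sum>l\<in>{..<M}. g (r l))}"
    by (rule measure_pmf.finite_measure_mono) simp
  also have "\<dots> \<le> exp (real (card {..<M}) * (m0 * p * \<theta>\<^sup>2) - (\<mu> * V0 - \<theta> * (m0 * t0)))"
    using mgf_small_set_le[OF S \<theta>] unfolding g_def \<mu>_def
    by (intro prob_Pi_pmf_sum_ge[OF finite_lessThan finite_set_row_pmf]) simp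
  also have "real (card {..<M}) * (m0 * p * \<theta>\<^sup>2) - (\<mu> * V0 - \<theta> * (m0 * t0)) = - (m0 * E0)"
    by (simp add: \<mu>_def t0_def V0_def \<theta>_def E0_def power2_eq_square algebra_simps)
  finally show ?thesis .
qed

lemma failure_prob_le:
  "1 - measure_pmf.prob (gt_dist M N p u q) {(X, D, W). colpal_success M N L Sd \<psi>0 X D W}
     \<le> (1 + real K) * exp (- E0) + real ((N - K) choose m0) * exp (- (m0 * E0))"
proof -
  let ?A = "{r. total_value r < V0}"
  let ?B = "\<Union>d\<in>Sd. {r. t0 \<le> score d r}"
  let ?C = "\<Union>S\<in>small_sets. {r. V0 \<le> total_value r \<and> (\<forall>k\<in>S. score k r \<le> t0)}"
  have fin_sets: "finite small_sets"
    by (auto simp: small_sets_def intro: finite_subset[of _ "Pow ({..<N} - Sd)"])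
  have card_sets: "card small_sets = (N - K) choose m0"
    using n_subsets[of "{..<N} - Sd" m0] card_Diff_subset[OF finite_Sd Sd] by (simp add: small_sets_def)
  have "measure_pmf.prob rows {r. \<not> separated r} \<le> measure_pmf.prob rows (?A \<union> ?B \<union> ?C)"
    by (rule measure_pmf.finite_measure_mono) (auto elim: not_separated_cases)
  also have "\<dots> \<le> measure_pmf.prob rows ?A + measure_pmf.prob rows ?B + measure_pmf.prob rows ?C"
    using measure_Un_le[of "?A \<union> ?B" rows ?C] measure_Un_le[of ?A rows ?B] by simp
  also have "measure_pmf.prob rows ?B \<le> (\<Sum>d\<in>Sd. measure_pmf.prob rows {r. t0 \<le> score d r})"
    by (rule measure_pmf.finite_measure_subadditive_finite) (use finite_Sd in auto)
  also have "\<dots> \<le> (\<Sum>d\<in>Sd. exp (- E0))"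
    by (intro sum_mono prob_defective_score_ge)
  also have "measure_pmf.prob rows ?C \<le>
      (\<Sum>S\<in>small_sets. measure_pmf.prob rows {r. V0 \<le> total_value r \<and> (\<forall>k\<in>S. score k r \<le> t0)})"
    by (rule measure_pmf.finite_measure_subadditive_finite) (use fin_sets in auto)
  also have "\<dots> \<le> (\<Sum>S\<in>small_sets. exp (- (m0 * E0)))"
    by (intro sum_mono prob_small_set_scores_le)
  finally have "measure_pmf.prob rows {r. \<not> separated r} \<le>
      (1 + real K) * exp (- E0) + real ((N - K) choose m0) * exp (- (m0 * E0))"
    using prob_total_value_less card_sets by (simp add: algebra_simps)
  moreover have "measure_pmf.prob rows {r. \<not> separated r} = 1 - measure_pmf.prob rows {r. separated r}"
    using measure_pmf.prob_compl[of "{r. separated r}" rows] by (simp add: Compl_eq_Diff_UNIV[symmetric]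
        Collect_neg_eq)
  ultimately show ?thesis
    using prob_separated_le_success by linarith
qed

text \<open>\<open>165888 = 2 * 256 * 18\<^sup>2\<close>, because \<open>E0 = M p \<delta>\<^sup>2 / 256\<close> and \<open>\<delta> \<ge> (1 - \<gamma>0) / 18\<close>.\<close>

lemma E0_ge:
  assumes Z: "0 \<le> (1 + c0) * Z"
    and M: "(1 + c0) * (real K * (1 - u) / ((1 - q) * (1 - \<gamma>0)\<^sup>2)) * (165888 * Z) \<le> real M"
  shows "2 * (1 + c0) * Z \<le> E0"
proof -
  have g: "0 < 1 - \<gamma>0"
    using \<gamma>0_bounds by auto
  define W where "W = real K * (1 - u) / ((1 - q) * (1 - \<gamma>0)\<^sup>2)"
  have "p * (1 - q) * (1 - \<gamma>0)\<^sup>2 * W = 1"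
  proof -
    define A where "A = (1 - u) * real K"
    define C where "C = (1 - q) * (1 - \<gamma>0)\<^sup>2"
    have "0 < A" "0 < C"
      using u q g K_ge_2 by (auto simp: A_def C_def)
    moreover have "p * (1 - q) * (1 - \<gamma>0)\<^sup>2 * W = 1 / A * C * (A / C)"
      by (simp add: W_def p_def A_def C_def mult_ac)
    ultimately show ?thesis
      by simp
  qed
  then have "(1 + c0) * (165888 * Z) = p * (1 - q) * (1 - \<gamma>0)\<^sup>2 * (W * ((1 + c0) * (165888 * Z)))"
    by (metis mult.assoc mult_1)
  also have "\<dots> \<le> p * (1 - q) * (1 - \<gamma>0)\<^sup>2 * real M"
    using M[folded W_def] p_pos q by (intro mult_left_mono) (auto simp: ac_simps)
  also have "\<dots> = real M * p * (1 - q) * (1 - \<gamma>0)\<^sup>2"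
    by (simp add: mult_ac)
  also have "\<dots> \<le> real M * p * (1 - \<gamma>0)\<^sup>2"
    using q p_pos by (intro mult_left_le mult_right_mono mult_left_mono) auto
  also have "\<dots> = 82944 * (real M * p * ((1 - \<gamma>0) / 18)\<^sup>2 / 256)"
    by (simp add: power2_eq_square)
  also have "\<dots> \<le> 82944 * E0"
    using \<delta>_bounds g p_pos unfolding E0_def by (intro mult_left_mono divide_right_mono power_mono) auto
  finally show ?thesis
    by (simp add: algebra_simps)
qed

lemma success_prob_gt:
  fixes c0 :: real
  defines "B \<equiv> real K * real ((N - K) choose (L - 1))"
  assumes c0: "0 < c0"
    and M: "(1 + c0) * (real K * (1 - u) / ((1 - q) * (1 - \<gamma>0)\<^sup>2)) *
       (165888 * ln B / (real (N - K) - real (L - 1)) + 165888 * ln (real K)) \<le> real M"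
  shows "measure_pmf.prob (gt_dist M N p u q) {(X, D, W). colpal_success M N L Sd \<psi>0 X D W}
     > 1 - 2 * exp (- c0 * ln B) - exp (- c0 * ln (real K))"
proof -
  define Z where "Z = ln B / real m0 + ln (real K)"
  have m0: "real m0 = real (N - K) - real (L - 1)" "1 \<le> m0"
    using L_le L_ge_1 by (auto simp: m0_def)
  have choose_m0: "(N - K) choose m0 = (N - K) choose (L - 1)"
    using L_le L_ge_1 binomial_symmetric[of "L - 1" "N - K"] by (simp add: m0_def)
  have "1 \<le> real ((N - K) choose (L - 1))"
    using L_le L_ge_1 by (simp add: Suc_leI)
  then have B: "real ((N - K) choose (L - 1)) \<le> B" "2 \<le> B"
    using K_ge_2 mult_right_mono[of 1 "real K" "real ((N - K) choose (L - 1))"]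
      mult_mono[of 2 "real K" 1] unfolding B_def by auto
  have lnK: "0 < ln (real K)"
    using K_ge_2 by simp
  have "0 \<le> ln B / real m0"
    using B by simp
  then have "0 \<le> (1 + c0) * Z"
    using c0 lnK by (simp add: Z_def)
  moreover have "(1 + c0) * (real K * (1 - u) / ((1 - q) * (1 - \<gamma>0)\<^sup>2)) * (165888 * Z) \<le> real M"
    using M[folded m0(1)] by (simp add: Z_def distrib_left)
  ultimately have E0: "2 * (1 + c0) * Z \<le> E0"
    by (rule E0_ge)
  have "2 * (1 + c0) * ln (real K) \<le> 2 * (1 + c0) * Z"
    using c0 \<open>0 \<le> ln B / real m0\<close> by (intro mult_left_mono) (auto simp: Z_def)
  then have "2 * (1 + c0) * ln (real K) \<le> E0"
    using E0 by linarith
  then have defective_term: "(1 + real K) * exp (- E0) < exp (- c0 * ln (real K))"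
    using c0 by (intro one_plus_mult_exp_minus_lt[OF K_ge_2]) auto
  have "(1 + c0) * ln B \<le> real m0 * (2 * (1 + c0) * Z)"
    using c0 lnK m0 B by (simp add: Z_def field_simps)
  also have "\<dots> \<le> real m0 * E0"
    using E0 by (intro mult_left_mono) auto
  finally have "B * exp (- (real m0 * E0)) \<le> exp (- c0 * ln B)"
    using B c0 by (intro mult_exp_minus_le) auto
  then have set_term: "real ((N - K) choose m0) * exp (- (m0 * E0)) \<le> exp (- c0 * ln B)"
    using B(1) choose_m0 by (smt (verit) exp_gt_zero mult_right_mono)
  have "0 \<le> exp (- c0 * ln B)"
    by simp
  then show ?thesis
    using failure_prob_le defective_term set_term by linarith
qed

end

theorem theorem3:
  fixes c0 :: real
  assumes "c0 > 0"
  shows "\<exists>Ca1 Ca2 :: real. Ca1 > 0 \<and> Ca2 > 0 \<and>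
    (\<forall>(N::nat) (K::nat) (L::nat) (M::nat) (Sd::nat set) (u::real) (q::real).
      Sd \<subseteq> {..<N} \<longrightarrow> card Sd = K \<longrightarrow> K > 1 \<longrightarrow> 1 \<le> L \<longrightarrow> L \<le> N - K \<longrightarrow>
      0 \<le> u \<longrightarrow> u < 1/2 \<longrightarrow> 0 \<le> q \<longrightarrow> q < 1/2 \<longrightarrow>
      (let p = 1 / ((1 - u) * real K);
           \<Gamma> = (1 - q) * (1 - (1 - u) * p) ^ K;
           \<gamma>0 = u / (1 - (1 - u) * p);
           \<psi>0 = min (\<gamma>0 * \<Gamma> / (1 - \<gamma>0 * \<Gamma>)) (\<Gamma> / (2 * (1 - \<Gamma>)));
           B = real K * real ((N - K) choose (L - 1))
       in real M \<ge> (1 + c0) * (real K * (1 - u) / ((1 - q) * (1 - \<gamma>0)\<^sup>2)) *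
                     (Ca1 * ln B / (real (N - K) - real (L - 1)) + Ca2 * ln (real K))
          \<longrightarrow> measure_pmf.prob (gt_dist M N p u q)
                {(X, D, W). colpal_success M N L Sd \<psi>0 X D W}
              > 1 - 2 * exp (- c0 * ln B) - exp (- c0 * ln (real K))))"
proof (intro exI[of _ 165888] conjI allI impI)
  fix N K L M :: nat and Sd :: "nat set" and u q :: real
  assume h: "Sd \<subseteq> {..<N}" "card Sd = K" "K > 1" "1 \<le> L" "L \<le> N - K"
    "0 \<le> u" "u < 1/2" "0 \<le> q" "q < 1/2"
  then interpret colpal_setting N L M Sd u q
    by unfold_locales auto
  show "let p = 1 / ((1 - u) * real K);
           \<Gamma> = (1 - q) * (1 - (1 - u) * p) ^ K;
           \<gamma>0 = u / (1 - (1 - u) * p);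
           \<psi>0 = min (\<gamma>0 * \<Gamma> / (1 - \<gamma>0 * \<Gamma>)) (\<Gamma> / (2 * (1 - \<Gamma>)));
           B = real K * real ((N - K) choose (L - 1))
       in real M \<ge> (1 + c0) * (real K * (1 - u) / ((1 - q) * (1 - \<gamma>0)\<^sup>2)) *
                     (165888 * ln B / (real (N - K) - real (L - 1)) + 165888 * ln (real K))
          \<longrightarrow> measure_pmf.prob (gt_dist M N p u q)
                {(X, D, W). colpal_success M N L Sd \<psi>0 X D W}
              > 1 - 2 * exp (- c0 * ln B) - exp (- c0 * ln (real K))"
    using success_prob_gt[OF assms, unfolded \<psi>0_def \<gamma>0_def \<Gamma>_def a_def p_def] h(2)
    unfolding Let_def by blast
qed simp_all

end
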